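(* Let $\mathcal H$ be a finite-dimensional Hilbert space, $\mathcal B\subseteq\mathcal L(\mathcal H)$ a Von Neumann algebra, and $\chi:\mathcal H\to\mathcal H_L^\chi\otimes\mathcal H_R^\chi$ a lean splitting map with $\mathrm{stloc}_R(\chi)=\mathcal B$. Then there exists an isometry $U$ such that $\mathrm{Tr}_\chi(X)=U\,\mathrm{Tr}_{\mathcal B}(X)\,U^\dagger$ for all $X\in\mathcal L(\mathcal H)$.
   Context: All Hilbert spaces are finite-dimensional and complex. A Von Neumann algebra on $\mathcal H$ is a $*$-subalgebra of $\mathcal L(\mathcal H)$ closed under adjoint and containing $\mathbb 1$; $\mathcal C'$ is the commutant and $\mathcal Z(\mathcal C)=\mathcal C\cap\mathcal C'$. A splitting map on $\mathcal H$ is an isometry $\chi:\mathcal H\to\mathcal H_L^\chi\otimes\mathcal H_R^\chi$; $\pi^\chi=\chi\chi^\dagger$. $B\in\mathcal L(\mathcal H_L^\chi)$ is left $\chi$-consistent if $\pi^\chi(B\otimes\mathbb 1)=(B\otimes\mathbb 1)\pi^\chi$ (set $\mathrm{cons}_L(\chi)$); $A\in\mathcal L(\mathcal H)$ is strictly left $\chi$-local if there is $\tilde A\in\mathcal L(\mathcal H_L^\chi)$ with $A\chi^\dagger=\chi^\dagger(\tilde A\otimes\mathbb 1)$ and $\chi A=(\tilde A\otimes\mathbb 1)\chi$ (set $\mathrm{stloc}_L(\chi)$). Right versions $\mathrm{cons}_R(\chi)$, $\mathrm{stloc}_R(\chi)$ are defined symmetrically on $\mathcal H_R^\chi$. $\chi$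 is balanced if $\mathrm{stloc}_R(\chi)=\mathrm{stloc}_L(\chi)'$, and lean if balanced with $\mathrm{cons}_L(\chi)'=\mathcal Z(\mathrm{cons}_L(\chi))$ in $\mathcal L(\mathcal H_L^\chi)$ and $\mathrm{cons}_R(\chi)'=\mathcal Z(\mathrm{cons}_R(\chi))$ in $\mathcal L(\mathcal H_R^\chi)$. The $\chi$-trace is $\mathrm{Tr}_\chi:\mathcal L(\mathcal H)\to\mathcal L(\mathcal H_L^\chi)$, $\mathrm{Tr}_\chi(X)=\mathrm{Tr}_{\mathcal H_R^\chi}(\chi X\chi^\dagger)$. Trace over the algebra $\mathcal B$: take a unitary $V:\mathcal H\to\bigoplus_i(\mathcal H_L^i\otimes\mathcal H_R^i)$ with $V\mathcal B'V^\dagger=\bigoplus_i\mathcal L(\mathcal H_L^i)\otimes\mathbb 1_{\mathcal H_R^i}$ (Artin–Wedderburn; then $V\mathcal BV^\dagger=\bigoplus_i\mathbb 1\otimes\mathcal L(\mathcal H_R^i)$). Identifying $\mathcal H$ with $\bigoplus_i(\mathcal H_L^i\otimes\mathcal H_R^i)$ via $V$, $\mathrm{Tr}_{\mathcal B}:\mathcal L(\mathcal H)\to\bigoplus_i\mathcal L(\mathcal H_L^i)$ is $\mathrm{Tr}_{\mathcal B}(X)=\bigoplus_i\mathrm{Tr}_{\mathcal H_R^i}(\pi_iX\pi_i)$ where $\pi_i$ projects onto $\mathcal H_L^i\otimes\mathcal H_R^i$. *)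

theory Defs
  imports "Jordan_Normal_Form.Schur_Decomposition"
begin

(* Conventions:
   H = C^n, H_L^chi = C^a, H_R^chi = C^b, operators are complex matrices.
   The tensor product C^a (x) C^b is identified with C^(a*b) via the index
   (p,q) |-> p*b + q  (p < a, q < b). *)

abbreviation adj :: "complex mat \<Rightarrow> complex mat" where
  "adj A \<equiv> mat_adjoint A"

definition isometry :: "nat \<Rightarrow> nat \<Rightarrow> complex mat \<Rightarrow> bool" where
  "isometry m n U \<longleftrightarrow> U \<in> carrier_mat m n \<and> adj U * U = 1\<^sub>m n"

definition unitary_mat :: "nat \<Rightarrow> complex mat \<Rightarrow> bool" where
  "unitary_mat n U \<longleftrightarrow> isometry n n U \<and> U * adj U = 1\<^sub>m n"

(* Von Neumann algebra on C^n (finite dim.): unital *-subalgebra *)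
definition vn_algebra :: "nat \<Rightarrow> complex mat set \<Rightarrow> bool" where
  "vn_algebra n \<B> \<longleftrightarrow> \<B> \<subseteq> carrier_mat n n \<and> 1\<^sub>m n \<in> \<B> \<and>
     (\<forall>A\<in>\<B>. \<forall>B\<in>\<B>. A + B \<in> \<B> \<and> A * B \<in> \<B>) \<and>
     (\<forall>c. \<forall>A\<in>\<B>. c \<cdot>\<^sub>m A \<in> \<B>) \<and> (\<forall>A\<in>\<B>. adj A \<in> \<B>)"

definition commutant :: "nat \<Rightarrow> complex mat set \<Rightarrow> complex mat set" where
  "commutant n \<C> = {A \<in> carrier_mat n n. \<forall>B\<in>\<C>. A * B = B * A}"

definition center :: "nat \<Rightarrow> complex mat set \<Rightarrow> complex mat set" where
  "center n \<C> = \<C> \<inter> commutant n \<C>"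

(* B (x) 1_b  for B an a x a matrix *)
definition tensor_id_right :: "nat \<Rightarrow> nat \<Rightarrow> complex mat \<Rightarrow> complex mat" where
  "tensor_id_right a b B = mat (a*b) (a*b)
     (\<lambda>(i,j). if i mod b = j mod b then B $$ (i div b, j div b) else 0)"

(* 1_a (x) C  for C a b x b matrix *)
definition tensor_id_left :: "nat \<Rightarrow> nat \<Rightarrow> complex mat \<Rightarrow> complex mat" where
  "tensor_id_left a b C = mat (a*b) (a*b)
     (\<lambda>(i,j). if i div b = j div b then C $$ (i mod b, j mod b) else 0)"

definition ptrace_right :: "nat \<Rightarrow> nat \<Rightarrow> complex mat \<Rightarrow> complex mat" where
  "ptrace_right a b M = mat a a (\<lambda>(i,j). \<Sum>q<b. M $$ (i*b + q, j*b + q))"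

definition splitting_map :: "nat \<Rightarrow> nat \<Rightarrow> nat \<Rightarrow> complex mat \<Rightarrow> bool" where
  "splitting_map n a b \<chi> \<longleftrightarrow> isometry (a*b) n \<chi>"

definition cons_L :: "nat \<Rightarrow> nat \<Rightarrow> complex mat \<Rightarrow> complex mat set" where
  "cons_L a b \<chi> = {B \<in> carrier_mat a a.
      (\<chi> * adj \<chi>) * tensor_id_right a b B = tensor_id_right a b B * (\<chi> * adj \<chi>)}"

definition cons_R :: "nat \<Rightarrow> nat \<Rightarrow> complex mat \<Rightarrow> complex mat set" where
  "cons_R a b \<chi> = {C \<in> carrier_mat b b.
      (\<chi> * adj \<chi>) * tensor_id_left a b C = tensor_id_left a b C * (\<chi> * adj \<chi>)}"

definition stloc_L :: "nat \<Rightarrow> nat \<Rightarrow> nat \<Rightarrow> complex mat \<Rightarrow> complex mat set" where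
  "stloc_L n a b \<chi> = {A \<in> carrier_mat n n. \<exists>At \<in> carrier_mat a a.
      A * adj \<chi> = adj \<chi> * tensor_id_right a b At \<and> \<chi> * A = tensor_id_right a b At * \<chi>}"

definition stloc_R :: "nat \<Rightarrow> nat \<Rightarrow> nat \<Rightarrow> complex mat \<Rightarrow> complex mat set" where
  "stloc_R n a b \<chi> = {A \<in> carrier_mat n n. \<exists>At \<in> carrier_mat b b.
      A * adj \<chi> = adj \<chi> * tensor_id_left a b At \<and> \<chi> * A = tensor_id_left a b At * \<chi>}"

definition balanced :: "nat \<Rightarrow> nat \<Rightarrow> nat \<Rightarrow> complex mat \<Rightarrow> bool" where
  "balanced n a b \<chi> \<longleftrightarrow> stloc_R n a b \<chi> = commutant n (stloc_L n a b \<chi>)"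

definition lean :: "nat \<Rightarrow> nat \<Rightarrow> nat \<Rightarrow> complex mat \<Rightarrow> bool" where
  "lean n a b \<chi> \<longleftrightarrow> balanced n a b \<chi> \<and>
     commutant a (cons_L a b \<chi>) = center a (cons_L a b \<chi>) \<and>
     commutant b (cons_R a b \<chi>) = center b (cons_R a b \<chi>)"

definition chi_trace :: "nat \<Rightarrow> nat \<Rightarrow> complex mat \<Rightarrow> complex mat \<Rightarrow> complex mat" where
  "chi_trace a b \<chi> X = ptrace_right a b (\<chi> * X * adj \<chi>)"

(* A decomposition is given by k blocks with dimensions
   dL i, dR i (i < k); block i of  (+)_i C^(dL i) (x) C^(dR i)  occupies the
   coordinates  offset i, ..., offset i + dL i * dR i - 1. *)
definition offs :: "(nat \<Rightarrow> nat) \<Rightarrow> nat \<Rightarrow> nat" where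
  "offs d i = (\<Sum>j<i. d j)"

definition embed :: "nat \<Rightarrow> nat \<Rightarrow> nat \<Rightarrow> complex mat" where
  "embed N off d = mat N d (\<lambda>(r,c). if r = off + c then 1 else 0)"

definition mat_sum :: "nat \<Rightarrow> nat \<Rightarrow> (nat \<Rightarrow> complex mat) \<Rightarrow> nat \<Rightarrow> complex mat" where
  "mat_sum N M f k = mat N M (\<lambda>(r,c). \<Sum>i<k. f i $$ (r,c))"

(* (+)_i (A i (x) 1_{dR i}) as an operator on C^n, n = sum_i dL i * dR i *)
definition blockdiag_tensor_id ::
  "nat \<Rightarrow> (nat \<Rightarrow> nat) \<Rightarrow> (nat \<Rightarrow> nat) \<Rightarrow> (nat \<Rightarrow> complex mat) \<Rightarrow> complex mat" where
  "blockdiag_tensor_id k dL dR A =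
     (let n = (\<Sum>i<k. dL i * dR i); P = (\<lambda>i. dL i * dR i) in
      mat_sum n n (\<lambda>i. embed n (offs P i) (P i) * tensor_id_right (dL i) (dR i) (A i)
                        * adj (embed n (offs P i) (P i))) k)"

definition AW_decomposition ::
  "nat \<Rightarrow> complex mat set \<Rightarrow> nat \<Rightarrow> (nat \<Rightarrow> nat) \<Rightarrow> (nat \<Rightarrow> nat) \<Rightarrow> complex mat \<Rightarrow> bool" where
  "AW_decomposition n \<B> k dL dR V \<longleftrightarrow>
     (\<forall>i<k. 0 < dL i \<and> 0 < dR i) \<and> (\<Sum>i<k. dL i * dR i) = n \<and> unitary_mat n V \<and>
     (\<lambda>Y. V * Y * adj V) ` commutant n \<B> =
       {blockdiag_tensor_id k dL dR A | A. \<forall>i<k. A i \<in> carrier_mat (dL i) (dL i)}"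

(* Tr_B(X) = (+)_i Tr_{C^(dR i)} (pi_i (V X V^dagger) pi_i), an operator on
   (+)_i C^(dL i) = C^m, m = sum_i dL i *)
definition alg_trace ::
  "nat \<Rightarrow> (nat \<Rightarrow> nat) \<Rightarrow> (nat \<Rightarrow> nat) \<Rightarrow> complex mat \<Rightarrow> complex mat \<Rightarrow> complex mat" where
  "alg_trace k dL dR V X =
     (let n = (\<Sum>i<k. dL i * dR i); m = (\<Sum>i<k. dL i); P = (\<lambda>i. dL i * dR i);
          Y = V * X * adj V in
      mat_sum m m (\<lambda>i. embed m (offs dL i) (dL i) *
          ptrace_right (dL i) (dR i)
            (adj (embed n (offs P i) (P i)) * Y * embed n (offs P i) (P i))
          * adj (embed m (offs dL i) (dL i))) k)"

end

theory Submission
  imports Defs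
begin

text \<open>Read the splitting map in Artin-Wedderburn coordinates as the isometry
  \<open>W = \<chi> V\<^sup>\<dagger> : \<Oplus>\<^sub>i \<complex>\<^bsup>dL i\<^esup> \<otimes> \<complex>\<^bsup>dR i\<^esup> \<rightarrow> \<complex>\<^sup>a \<otimes> \<complex>\<^sup>b\<close>. Since \<open>stloc\<^sub>R(\<chi>) = \<B>\<close> and \<open>\<chi>\<close> is
  balanced, \<open>W\<^sup>\<dagger>(B \<otimes> 1)W\<close> lies in \<open>\<Oplus>\<^sub>i L(\<complex>\<^bsup>dL i\<^esup>) \<otimes> 1\<close>, \<open>W\<^sup>\<dagger>(1 \<otimes> C)W\<close> commutes with it, and every
  operator commuting with it is carried by \<open>W\<close> to some \<open>1 \<otimes> C\<close>. Leanness makes the commutant of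
  \<open>cons\<^sub>L(\<chi>)\<close> commutative; applied to the \<open>b \<times> b\<close> blocks of the projection onto
  \<open>W(\<complex>\<^bsup>dL i\<^esup> \<otimes> f\<^sub>0)\<close>, a rank-one argument shows that \<open>W(e\<^sub>x \<otimes> f\<^sub>r) = s\<^sub>i\<^sub>x \<otimes> t\<^sub>i\<^sub>r\<close> on the \<open>i\<close>-th
  summand. After normalisation both families are orthonormal, so tracing out \<open>\<complex>\<^sup>b\<close> after \<open>W\<close>
  is tracing out each \<open>\<complex>\<^bsup>dR i\<^esup>\<close> and then applying the isometry \<open>U\<close> with columns \<open>s\<^sub>i\<^sub>x\<close>.\<close>

declare index_mult_mat(1)[simp del] assoc_mult_mat[simp del]

lemma mat_adjoint_altdef: "adj A = mat (dim_col A) (dim_row A) (\<lambda>(i,j). cnj (A $$ (j,i)))"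
  unfolding mat_adjoint_def mat_of_rows_def by (rule eq_matI) auto

lemma dim_mat_adjoint[simp]: "dim_row (adj A) = dim_col A" "dim_col (adj A) = dim_row A"
  by (simp_all add: mat_adjoint_altdef)

lemma mat_adjoint_carrier[simp]: "A \<in> carrier_mat m n \<Longrightarrow> adj A \<in> carrier_mat n m"
  by (simp add: mat_adjoint_altdef)

lemma index_mat_adjoint[simp]: "i < dim_col A \<Longrightarrow> j < dim_row A \<Longrightarrow> adj A $$ (i,j) = cnj (A $$ (j,i))"
  by (simp add: mat_adjoint_altdef)

lemma mat_adjoint_adjoint[simp]: "adj (adj A) = A"
  by (rule eq_matI) auto

lemma index_mult_mat_sum:
  "A \<in> carrier_mat m n \<Longrightarrow> B \<in> carrier_mat n p \<Longrightarrow> i < m \<Longrightarrow> j < p \<Longrightarrow>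
   (A * B) $$ (i,j) = (\<Sum>l<n. A $$ (i,l) * B $$ (l,j))"
  by (auto simp: index_mult_mat scalar_prod_def lessThan_atLeast0 intro!: sum.cong)

lemma mat_adjoint_mult:
  assumes "A \<in> carrier_mat m n" "B \<in> carrier_mat n p"
  shows "adj (A * B) = adj B * adj A"
proof (rule eq_matI)
  fix i j assume "i < dim_row (adj B * adj A)" "j < dim_col (adj B * adj A)"
  with assms have "i < p" "j < m" by auto
  with assms show "adj (A * B) $$ (i,j) = (adj B * adj A) $$ (i,j)"
    by (simp add: index_mult_mat_sum[of A m n B p] index_mult_mat_sum[of "adj B" p n "adj A" m]
        mult.commute)
qed (use assms in auto)

lemma assoc_mult_mat_dims:
  "dim_col A = dim_row B \<Longrightarrow> dim_col B = dim_row C \<Longrightarrow> A * B * C = A * (B * (C :: 'a::semiring_0 mat))"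
  by (rule assoc_mult_mat[of A "dim_row A" "dim_col A" B "dim_col B" C "dim_col C"]) auto

lemma index_conj_mult_mat_sum:
  assumes A: "A \<in> carrier_mat N M" and B: "B \<in> carrier_mat M M" and uv: "u < N" "v < N"
  shows "(A * B * adj A) $$ (u,v) = (\<Sum>f<M. \<Sum>g<M. A $$ (u,f) * B $$ (f,g) * cnj (A $$ (v,g)))"
proof -
  have "(A * B * adj A) $$ (u,v) = (\<Sum>g<M. (\<Sum>f<M. A $$ (u,f) * B $$ (f,g)) * cnj (A $$ (v,g)))"
    using assms by (simp add: index_mult_mat_sum[of "A * B" N M "adj A" N] index_mult_mat_sum[OF A B])
  also have "\<dots> = (\<Sum>g<M. \<Sum>f<M. A $$ (u,f) * B $$ (f,g) * cnj (A $$ (v,g)))"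
    by (simp add: sum_distrib_right)
  also have "\<dots> = (\<Sum>f<M. \<Sum>g<M. A $$ (u,f) * B $$ (f,g) * cnj (A $$ (v,g)))"
    by (rule sum.swap)
  finally show ?thesis .
qed

lemma sum_cnj_mult_self_eq_0:
  assumes "(\<Sum>p<m. cnj (v p) * v p) = 0" "p < (m::nat)"
  shows "v p = (0::complex)"
proof -
  have "complex_of_real (\<Sum>p<m. (cmod (v p))\<^sup>2) = 0"
    unfolding of_real_sum complex_norm_square using assms(1) by (simp add: mult.commute)
  then have "(\<Sum>p<m. (cmod (v p))\<^sup>2) = 0"
    by (simp only: of_real_eq_0_iff)
  with assms(2) show ?thesis
    using sum_nonneg_eq_0_iff[of "{..<m}" "\<lambda>p. (cmod (v p))\<^sup>2"] by simp
qed

lemma sum_if_const_cond: "(\<Sum>x\<in>S. if P then f x else 0) = (if P then (\<Sum>x\<in>S. f x) else 0)"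
  by simp

lemma sum_product_cnj:
  "(\<Sum>p<a. \<Sum>q<b. cnj (s p * t q) * (s' p * t' q)) =
   (\<Sum>p<(a::nat). cnj (s p) * s' p) * (\<Sum>q<(b::nat). cnj (t q) * (t' q :: complex))"
  unfolding sum_product by (intro sum.cong refl) (simp add: algebra_simps)

lemma sum_mult_cnj_product:
  "(\<Sum>q\<in>Q. s * t q * cnj (s' * t' q)) = s * cnj s' * cnj (\<Sum>q\<in>Q. cnj (t q) * (t' q :: complex))"
  by (simp add: sum_distrib_left mult_ac)

definition unit_mat :: "nat \<Rightarrow> nat \<Rightarrow> nat \<Rightarrow> complex mat" where
  "unit_mat m u v = mat m m (\<lambda>(i,j). if i = u \<and> j = v then 1 else 0)"

lemma unit_mat_carrier[simp]: "unit_mat m u v \<in> carrier_mat m m"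
  by (simp add: unit_mat_def)

lemma index_unit_mat[simp]:
  "i < m \<Longrightarrow> j < m \<Longrightarrow> unit_mat m u v $$ (i,j) = (if i = u then if j = v then 1 else 0 else 0)"
  by (simp add: unit_mat_def)

subsection \<open>Tensor products with the identity\<close>

lemma pair_index_less: "p < a \<Longrightarrow> q < b \<Longrightarrow> p * b + q < a * (b::nat)"
proof -
  assume "p < a" "q < b"
  then have "p * b + q < Suc p * b" by simp
  also have "\<dots> \<le> a * b" using \<open>p < a\<close> by (intro mult_le_mono1) simp
  finally show ?thesis .
qed

lemma pair_index_eq_iff: "q < b \<Longrightarrow> q' < b \<Longrightarrow> p * b + q = p' * b + q' \<longleftrightarrow> p = p' \<and> q = (q'::nat)"
  by (metis add.commute div_mult_self1 div_less mod_mult_self1 mod_less not_less0 add_0)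

lemma sum_pair_index: "(\<Sum>u<a * b. f u) = (\<Sum>p<a. \<Sum>q<b. f (p * b + q :: nat))"
proof -
  have "(\<Sum>u<a * b. f u) = (\<Sum>p<a. sum f {p * b..<p * b + b})"
    by (rule sum.nat_group[symmetric])
  also have "\<dots> = (\<Sum>p<a. \<Sum>q<b. f (p * b + q))"
    using sum.shift_bounds_nat_ivl[of f 0 "_ * b" b] by (simp add: lessThan_atLeast0 add.commute)
  finally show ?thesis .
qed

lemma tensor_id_right_carrier[simp]: "tensor_id_right a b B \<in> carrier_mat (a * b) (a * b)"
  by (simp add: tensor_id_right_def)

lemma tensor_id_left_carrier[simp]: "tensor_id_left a b C \<in> carrier_mat (a * b) (a * b)"
  by (simp add: tensor_id_left_def)

lemma dim_tensor_id[simp]: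
  "dim_row (tensor_id_right a b B) = a * b" "dim_col (tensor_id_right a b B) = a * b"
  "dim_row (tensor_id_left a b C) = a * b" "dim_col (tensor_id_left a b C) = a * b"
  by (simp_all add: tensor_id_right_def tensor_id_left_def)

lemma index_tensor_id_right:
  "p < a \<Longrightarrow> p' < a \<Longrightarrow> q < b \<Longrightarrow> q' < b \<Longrightarrow>
   tensor_id_right a b B $$ (p * b + q, p' * b + q') = (if q = q' then B $$ (p, p') else 0)"
  using pair_index_less[of p a q b] pair_index_less[of p' a q' b] by (simp add: tensor_id_right_def)

lemma index_tensor_id_left:
  "p < a \<Longrightarrow> p' < a \<Longrightarrow> q < b \<Longrightarrow> q' < b \<Longrightarrow>
   tensor_id_left a b C $$ (p * b + q, p' * b + q') = (if p = p' then C $$ (q, q') else 0)"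
  using pair_index_less[of p a q b] pair_index_less[of p' a q' b] by (simp add: tensor_id_left_def)

lemma index_tensor_id_right_mult:
  assumes "Z \<in> carrier_mat (a * b) m" "p < a" "q < b" "v < m"
  shows "(tensor_id_right a b B * Z) $$ (p * b + q, v) = (\<Sum>p'<a. B $$ (p, p') * Z $$ (p' * b + q, v))"
  using assms pair_index_less[of p a q b]
  by (simp add: index_mult_mat_sum[of _ "a * b" "a * b" Z m] sum_pair_index index_tensor_id_right
      if_distrib[of "\<lambda>x. x * _"] cong: if_cong)

lemma index_mult_tensor_id_right:
  assumes "Z \<in> carrier_mat m (a * b)" "p < a" "q < b" "u < m"
  shows "(Z * tensor_id_right a b B) $$ (u, p * b + q) = (\<Sum>p'<a. Z $$ (u, p' * b + q) * B $$ (p', p))"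
  using assms pair_index_less[of p a q b]
  by (simp add: index_mult_mat_sum[of Z m "a * b" _ "a * b"] sum_pair_index index_tensor_id_right
      if_distrib[of "\<lambda>x. _ * x"] cong: if_cong)

lemma index_tensor_id_left_mult:
  assumes "Z \<in> carrier_mat (a * b) m" "p < a" "q < b" "v < m"
  shows "(tensor_id_left a b C * Z) $$ (p * b + q, v) = (\<Sum>q'<b. C $$ (q, q') * Z $$ (p * b + q', v))"
  using assms pair_index_less[of p a q b]
  by (simp add: index_mult_mat_sum[of _ "a * b" "a * b" Z m] sum_pair_index index_tensor_id_left
      if_distrib[of "\<lambda>x. x * _"] sum_if_const_cond cong: if_cong)

lemma tensor_id_right_left_commute:
  "tensor_id_right a b B * tensor_id_left a b C = tensor_id_left a b C * tensor_id_right a b B"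
proof (rule eq_matI)
  have entry: "(tensor_id_right a b B * tensor_id_left a b C) $$ (p * b + q, p' * b + q') = B $$ (p, p') * C $$ (q, q') \<and>
      (tensor_id_left a b C * tensor_id_right a b B) $$ (p * b + q, p' * b + q') = B $$ (p, p') * C $$ (q, q')"
    if "p < a" "q < b" "p' < a" "q' < b" for p q p' q'
    using that pair_index_less[OF that(3,4)]
    by (simp add: index_tensor_id_right_mult[where m = "a * b"] index_tensor_id_left_mult[where m = "a * b"]
        index_tensor_id_left index_tensor_id_right if_distrib[of "\<lambda>x. _ * x"] cong: if_cong)
  fix i j assume "i < dim_row (tensor_id_left a b C * tensor_id_right a b B)"
    "j < dim_col (tensor_id_left a b C * tensor_id_right a b B)"
  then have ij: "i < a * b" "j < a * b" by simp_all
  then have "0 < b" by (cases b) auto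
  with ij have "i div b < a" "i mod b < b" "j div b < a" "j mod b < b"
    by (auto simp: less_mult_imp_div_less)
  from entry[OF this] show "(tensor_id_right a b B * tensor_id_left a b C) $$ (i,j) =
      (tensor_id_left a b C * tensor_id_right a b B) $$ (i,j)"
    by simp
qed simp_all

lemma ptrace_right_carrier[simp]: "ptrace_right a b M \<in> carrier_mat a a"
  by (simp add: ptrace_right_def)

lemma index_ptrace_right:
  "p < a \<Longrightarrow> p' < a \<Longrightarrow> ptrace_right a b M $$ (p, p') = (\<Sum>q<b. M $$ (p * b + q, p' * b + q))"
  by (simp add: ptrace_right_def)

text \<open>The operator \<open>(1 \<otimes> \<langle>c|) Z (1 \<otimes> |d\<rangle>)\<close> on \<open>\<complex>\<^sup>a\<close>.\<close>

definition partial_entry :: "nat \<Rightarrow> nat \<Rightarrow> complex mat \<Rightarrow> nat \<Rightarrow> nat \<Rightarrow> complex mat" where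
  "partial_entry a b Z c d = mat a a (\<lambda>(p, p'). Z $$ (p * b + c, p' * b + d))"

lemma partial_entry_carrier[simp]: "partial_entry a b Z c d \<in> carrier_mat a a"
  by (simp add: partial_entry_def)

lemma partial_entry_commute:
  assumes Z: "Z \<in> carrier_mat (a * b) (a * b)" and B: "B \<in> carrier_mat a a" and cd: "c < b" "d < b"
    and comm: "tensor_id_right a b B * Z = Z * tensor_id_right a b B"
  shows "B * partial_entry a b Z c d = partial_entry a b Z c d * B"
proof (rule eq_matI)
  fix p p'' assume "p < dim_row (partial_entry a b Z c d * B)" "p'' < dim_col (partial_entry a b Z c d * B)"
  with B have pp: "p < a" "p'' < a" by (auto simp: partial_entry_def)
  have "(B * partial_entry a b Z c d) $$ (p, p'') = (tensor_id_right a b B * Z) $$ (p * b + c, p'' * b + d)"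
    unfolding index_mult_mat_sum[OF B partial_entry_carrier pp] using pp cd Z pair_index_less[OF pp(2) cd(2)]
    by (simp add: index_tensor_id_right_mult partial_entry_def)
  also have "\<dots> = (Z * tensor_id_right a b B) $$ (p * b + c, p'' * b + d)"
    by (simp only: comm)
  also have "\<dots> = (partial_entry a b Z c d * B) $$ (p, p'')"
    unfolding index_mult_mat_sum[OF partial_entry_carrier B pp] using pp cd Z pair_index_less[OF pp(1) cd(1)]
    by (simp add: index_mult_tensor_id_right partial_entry_def)
  finally show "(B * partial_entry a b Z c d) $$ (p, p'') = (partial_entry a b Z c d * B) $$ (p, p'')" .
qed (use B in \<open>auto simp: partial_entry_def\<close>)

subsection \<open>Direct sums\<close>

lemma offs_Suc: "offs d (Suc i) = offs d i + d i"
  by (simp add: offs_def)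

lemma offs_add_le: "i < j \<Longrightarrow> offs d i + d i \<le> offs d j"
proof (induction j)
  case (Suc j)
  then show ?case by (cases "i < j") (auto simp: offs_Suc less_Suc_eq)
qed simp

lemma offs_less: "i < k \<Longrightarrow> c < d i \<Longrightarrow> offs d i + c < offs d k"
  using offs_add_le[of i k d] by simp

lemma offs_add_inj:
  assumes "c < d i" "c' < d j" "offs d i + c = offs d j + c'"
  shows "i = j \<and> c = c'"
proof -
  have "\<not> i < j" "\<not> j < i"
    using offs_add_le[of i j d] offs_add_le[of j i d] assms by auto
  then show ?thesis using assms by simp
qed

lemma less_offsE:
  assumes "g < offs d k"
  obtains i c where "i < k" "c < d i" "g = offs d i + c"
proof -
  have "\<exists>i<k. \<exists>c<d i. g = offs d i + c"
    using assms
  proof (induction k)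
    case (Suc k)
    show ?case
    proof (cases "g < offs d k")
      case True
      with Suc.IH show ?thesis using less_Suc_eq by blast
    next
      case False
      with Suc.prems have "g - offs d k < d k" "g = offs d k + (g - offs d k)"
        by (simp_all add: offs_Suc)
      then show ?thesis by blast
    qed
  qed (simp add: offs_def)
  with that show ?thesis by blast
qed

lemma sum_offs: "(\<Sum>g<offs d k. f g) = (\<Sum>i<k. \<Sum>c<d i. f (offs d i + c))"
proof (induction k)
  case (Suc k)
  have "(\<Sum>g<m + l. f g) = (\<Sum>g<m. f g) + (\<Sum>c<l. f (m + c))" for m l
    by (induction l) (simp_all add: add.assoc)
  with Suc show ?case by (simp add: offs_Suc)
qed (simp add: offs_def)

lemma offs_block_iff:
  assumes "c < d i"
  shows "offs d j \<le> offs d i + c \<and> offs d i + c < offs d j + d j \<longleftrightarrow> j = i"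
proof
  assume "offs d j \<le> offs d i + c \<and> offs d i + c < offs d j + d j"
  then have "offs d j + (offs d i + c - offs d j) = offs d i + c" "offs d i + c - offs d j < d j"
    by auto
  with assms show "j = i" using offs_add_inj by metis
qed (use assms in auto)

lemma embed_carrier[simp]: "embed N off d \<in> carrier_mat N d"
  by (simp add: embed_def)

lemma dim_embed[simp]: "dim_row (embed N off d) = N" "dim_col (embed N off d) = d"
  by (simp_all add: embed_def)

lemma index_embed: "r < N \<Longrightarrow> c < d \<Longrightarrow> embed N off d $$ (r, c) = (if r = off + c then 1 else 0)"
  by (simp add: embed_def)

lemma sum_if_eq_offset:
  "(\<Sum>c<(d::nat). if g = off + c then F c else 0) = (if off \<le> g \<and> g < off + d then F (g - off) else (0::'a::comm_monoid_add))"
proof (cases "off \<le> g \<and> g < off + d")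
  case True
  have "(\<Sum>c<d. if g = off + c then F c else 0) = (\<Sum>c<d. if c = g - off then F c else 0)"
    by (rule sum.cong) (use True in auto)
  moreover have "g - off < d" using True by linarith
  ultimately show ?thesis using True by simp
qed (auto intro!: sum.neutral)

lemma index_embed_conj:
  assumes "off + d \<le> N" "T \<in> carrier_mat d d" "g < N" "h < N"
  shows "(embed N off d * T * adj (embed N off d)) $$ (g, h) =
    (if (off \<le> g \<and> g < off + d) \<and> (off \<le> h \<and> h < off + d) then T $$ (g - off, h - off) else 0)"
proof -
  have "(embed N off d * T * adj (embed N off d)) $$ (g, h) =
      (\<Sum>c'<d. if h = off + c' then (\<Sum>c<d. if g = off + c then T $$ (c, c') else 0) else 0)"
    using assms mult_carrier_mat[OF embed_carrier assms(2)]
    by (auto simp: index_mult_mat_sum[of _ N d _ N] index_mult_mat_sum[of _ N d _ d] index_embed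
        intro!: sum.cong)
  also have "\<dots> = (if (off \<le> g \<and> g < off + d) \<and> (off \<le> h \<and> h < off + d) then T $$ (g - off, h - off) else 0)"
    by (simp add: sum_if_eq_offset)
  finally show ?thesis .
qed

lemma index_adj_embed_conj:
  assumes "off + d \<le> N" "Y \<in> carrier_mat N N" "c < d" "c' < d"
  shows "(adj (embed N off d) * Y * embed N off d) $$ (c, c') = Y $$ (off + c, off + c')"
proof -
  have "(adj (embed N off d) * Y) $$ (c, h) = Y $$ (off + c, h)" if "h < N" for h
    using assms that
    by (simp add: index_mult_mat_sum[of _ d N _ N] index_embed if_distrib[of cnj]
        if_distrib[of "\<lambda>x. x * _"] cong: if_cong)
  then show ?thesis
    using assms mult_carrier_mat[OF mat_adjoint_carrier[OF embed_carrier] assms(2)]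
    by (simp add: index_mult_mat_sum[of _ d N _ d] index_embed if_distrib[of "\<lambda>x. _ * x"] cong: if_cong)
qed

lemma mat_sum_carrier[simp]: "mat_sum N M f k \<in> carrier_mat N M"
  by (simp add: mat_sum_def)

lemma index_mat_sum: "r < N \<Longrightarrow> c < M \<Longrightarrow> mat_sum N M f k $$ (r, c) = (\<Sum>i<k. f i $$ (r, c))"
  by (simp add: mat_sum_def)

definition direct_sum :: "(nat \<Rightarrow> nat) \<Rightarrow> nat \<Rightarrow> (nat \<Rightarrow> complex mat) \<Rightarrow> complex mat" where
  "direct_sum d k M = mat_sum (offs d k) (offs d k)
     (\<lambda>i. embed (offs d k) (offs d i) (d i) * M i * adj (embed (offs d k) (offs d i) (d i))) k"

lemma direct_sum_carrier[simp]: "direct_sum d k M \<in> carrier_mat (offs d k) (offs d k)"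
  by (simp add: direct_sum_def)

lemma index_direct_sum:
  assumes "\<And>i. i < k \<Longrightarrow> M i \<in> carrier_mat (d i) (d i)"
    and "i < k" "j < k" "c < d i" "c' < d j"
  shows "direct_sum d k M $$ (offs d i + c, offs d j + c') = (if i = j then M i $$ (c, c') else 0)"
proof -
  have "direct_sum d k M $$ (offs d i + c, offs d j + c') = (\<Sum>l<k. if l = i \<and> l = j then M l $$ (c, c') else 0)"
    unfolding direct_sum_def using assms offs_less[of i k c d] offs_less[of j k c' d]
    by (auto simp: index_mat_sum index_embed_conj offs_add_le offs_block_iff[of c d i]
        offs_block_iff[of c' d j] intro!: sum.cong)
  also have "\<dots> = (if i = j then M i $$ (c, c') else 0)"
    using assms by (cases "i = j") (auto intro!: sum.neutral)
  finally show ?thesis .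
qed

lemma eq_mat_offsI:
  assumes "A \<in> carrier_mat (offs d k) (offs d k)" "B \<in> carrier_mat (offs d k) (offs d k)"
    and "\<And>i c j c'. i < k \<Longrightarrow> c < d i \<Longrightarrow> j < k \<Longrightarrow> c' < d j \<Longrightarrow>
      A $$ (offs d i + c, offs d j + c') = B $$ (offs d i + c, offs d j + c')"
  shows "A = B"
proof (rule eq_matI)
  fix g h assume "g < dim_row B" "h < dim_col B"
  with assms(2) have "g < offs d k" "h < offs d k" by auto
  then show "A $$ (g, h) = B $$ (g, h)"
    by (elim less_offsE) (simp add: assms(3))
qed (use assms in auto)

definition block_index :: "(nat \<Rightarrow> nat) \<Rightarrow> (nat \<Rightarrow> nat) \<Rightarrow> nat \<Rightarrow> nat \<Rightarrow> nat \<Rightarrow> nat" where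
  "block_index dL dR i x r = offs (\<lambda>i. dL i * dR i) i + (x * dR i + r)"

lemma offs_block_dims: "offs (\<lambda>i. dL i * dR i) k = (\<Sum>i<k. dL i * dR i)"
  by (simp add: offs_def)

lemma block_index_less:
  "i < k \<Longrightarrow> x < dL i \<Longrightarrow> r < dR i \<Longrightarrow> block_index dL dR i x r < (\<Sum>i<k. dL i * dR i)"
  unfolding block_index_def offs_block_dims[symmetric] by (intro offs_less pair_index_less)

lemma block_index_eq_iff:
  assumes "x < dL i" "r < dR i" "y < dL j" "s < dR j"
  shows "block_index dL dR i x r = block_index dL dR j y s \<longleftrightarrow> i = j \<and> x = y \<and> r = s"
proof
  assume "block_index dL dR i x r = block_index dL dR j y s"
  then have "i = j \<and> x * dR i + r = y * dR j + s"
    using offs_add_inj[of "x * dR i + r" "\<lambda>i. dL i * dR i" i "y * dR j + s" j] assms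
      pair_index_less[of x "dL i" r "dR i"] pair_index_less[of y "dL j" s "dR j"]
    unfolding block_index_def by auto
  with assms show "i = j \<and> x = y \<and> r = s" using pair_index_eq_iff by metis
qed auto

lemma sum_block_index:
  "(\<Sum>g<(\<Sum>i<k. dL i * dR i). f g) = (\<Sum>i<k. \<Sum>x<dL i. \<Sum>r<dR i. f (block_index dL dR i x r))"
  unfolding offs_block_dims[symmetric] sum_offs block_index_def by (simp add: sum_pair_index)

lemma less_block_indexE:
  assumes "g < (\<Sum>i<k. dL i * dR i)"
  obtains i x r where "i < k" "x < dL i" "r < dR i" "g = block_index dL dR i x r"
proof -
  obtain i c where ic: "i < k" "c < dL i * dR i" "g = offs (\<lambda>i. dL i * dR i) i + c"
    using assms unfolding offs_block_dims[symmetric] by (elim less_offsE)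
  then have "0 < dR i" by (cases "dR i") auto
  with ic have "c div dR i < dL i" "c mod dR i < dR i" "c = c div dR i * dR i + c mod dR i"
    by (auto simp: less_mult_imp_div_less)
  with ic that show ?thesis unfolding block_index_def by metis
qed

lemma eq_mat_block_indexI:
  assumes "A \<in> carrier_mat n n" "B \<in> carrier_mat n n" "n = (\<Sum>i<k. dL i * dR i)"
    and "\<And>i x r j y s. i < k \<Longrightarrow> x < dL i \<Longrightarrow> r < dR i \<Longrightarrow> j < k \<Longrightarrow> y < dL j \<Longrightarrow> s < dR j \<Longrightarrow>
      A $$ (block_index dL dR i x r, block_index dL dR j y s) = B $$ (block_index dL dR i x r, block_index dL dR j y s)"
  shows "A = B"
proof (rule eq_matI)
  fix g h assume "g < dim_row B" "h < dim_col B"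
  with assms(2,3) have "g < (\<Sum>i<k. dL i * dR i)" "h < (\<Sum>i<k. dL i * dR i)" by auto
  then show "A $$ (g, h) = B $$ (g, h)"
    by (elim less_block_indexE) (simp add: assms(4))
qed (use assms in auto)

lemma sum_block_index_delta:
  fixes dL dR :: "nat \<Rightarrow> nat"
  assumes "i < k" "r < dR i"
  shows "(\<Sum>j<k. \<Sum>y<dL j. \<Sum>s<dR j. if j = i \<and> s = r then F j y s else 0) = (\<Sum>y<dL i. F i y r)"
proof -
  have "(\<Sum>j<k. \<Sum>y<dL j. \<Sum>s<dR j. if j = i \<and> s = r then F j y s else 0) =
      (\<Sum>j<k. if j = i then (\<Sum>y<dL j. F j y r) else 0)"
    using assms by (intro sum.cong refl) auto
  also have "\<dots> = (\<Sum>y<dL i. F i y r)"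
    using assms by simp
  finally show ?thesis .
qed

text \<open>\<open>\<Oplus>\<^sub>i L(\<complex>\<^bsup>dL i\<^esup>) \<otimes> 1\<close>, the image of \<open>\<B>'\<close> in an Artin-Wedderburn decomposition, and the elements
  \<open>\<Oplus>\<^sub>i 1 \<otimes> C i\<close> of its commutant.\<close>

definition blockdiag_algebra :: "nat \<Rightarrow> (nat \<Rightarrow> nat) \<Rightarrow> (nat \<Rightarrow> nat) \<Rightarrow> complex mat set" where
  "blockdiag_algebra k dL dR = {blockdiag_tensor_id k dL dR A | A. \<forall>i<k. A i \<in> carrier_mat (dL i) (dL i)}"

definition blockdiag_id_tensor ::
  "nat \<Rightarrow> (nat \<Rightarrow> nat) \<Rightarrow> (nat \<Rightarrow> nat) \<Rightarrow> (nat \<Rightarrow> complex mat) \<Rightarrow> complex mat" where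
  "blockdiag_id_tensor k dL dR C = direct_sum (\<lambda>i. dL i * dR i) k (\<lambda>i. tensor_id_left (dL i) (dR i) (C i))"

lemma blockdiag_tensor_id_eq_direct_sum:
  "blockdiag_tensor_id k dL dR A = direct_sum (\<lambda>i. dL i * dR i) k (\<lambda>i. tensor_id_right (dL i) (dR i) (A i))"
  by (simp add: blockdiag_tensor_id_def direct_sum_def offs_def Let_def)

lemma blockdiag_tensor_id_carrier[simp]:
  "blockdiag_tensor_id k dL dR A \<in> carrier_mat (\<Sum>i<k. dL i * dR i) (\<Sum>i<k. dL i * dR i)"
  by (metis blockdiag_tensor_id_eq_direct_sum direct_sum_carrier offs_block_dims)

lemma blockdiag_id_tensor_carrier[simp]:
  "blockdiag_id_tensor k dL dR C \<in> carrier_mat (\<Sum>i<k. dL i * dR i) (\<Sum>i<k. dL i * dR i)"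
  by (metis blockdiag_id_tensor_def direct_sum_carrier offs_block_dims)

lemma index_blockdiag_tensor_id:
  assumes "i < k" "x < dL i" "r < dR i" "j < k" "y < dL j" "s < dR j"
  shows "blockdiag_tensor_id k dL dR A $$ (block_index dL dR i x r, block_index dL dR j y s) =
    (if i = j \<and> r = s then A i $$ (x, y) else 0)"
  using assms pair_index_less[of x "dL i" r "dR i"] pair_index_less[of y "dL j" s "dR j"]
  unfolding blockdiag_tensor_id_eq_direct_sum block_index_def
  by (auto simp: index_direct_sum index_tensor_id_right)

lemma index_blockdiag_id_tensor:
  assumes "i < k" "x < dL i" "r < dR i" "j < k" "y < dL j" "s < dR j"
  shows "blockdiag_id_tensor k dL dR C $$ (block_index dL dR i x r, block_index dL dR j y s) =
    (if i = j \<and> x = y then C i $$ (r, s) else 0)"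
  using assms pair_index_less[of x "dL i" r "dR i"] pair_index_less[of y "dL j" s "dR j"]
  unfolding blockdiag_id_tensor_def block_index_def
  by (auto simp: index_direct_sum index_tensor_id_left)

lemma index_blockdiag_tensor_id_mult:
  assumes M: "M \<in> carrier_mat (\<Sum>i<k. dL i * dR i) m" and "i < k" "x < dL i" "r < dR i" "h < m"
  shows "(blockdiag_tensor_id k dL dR A * M) $$ (block_index dL dR i x r, h) =
    (\<Sum>y<dL i. A i $$ (x, y) * M $$ (block_index dL dR i y r, h))"
proof -
  have "(blockdiag_tensor_id k dL dR A * M) $$ (block_index dL dR i x r, h) =
      (\<Sum>j<k. \<Sum>y<dL j. \<Sum>s<dR j. blockdiag_tensor_id k dL dR A $$ (block_index dL dR i x r, block_index dL dR j y s)
        * M $$ (block_index dL dR j y s, h))"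
    using assms block_index_less[of i k x dL r dR]
    by (simp add: index_mult_mat_sum[OF blockdiag_tensor_id_carrier M] sum_block_index)
  also have "\<dots> = (\<Sum>j<k. \<Sum>y<dL j. \<Sum>s<dR j. if j = i \<and> s = r then A i $$ (x, y) * M $$ (block_index dL dR j y s, h) else 0)"
    using assms by (intro sum.cong refl) (auto simp: index_blockdiag_tensor_id)
  also have "\<dots> = (\<Sum>y<dL i. A i $$ (x, y) * M $$ (block_index dL dR i y r, h))"
    using assms(2,4) by (rule sum_block_index_delta)
  finally show ?thesis .
qed

lemma index_mult_blockdiag_tensor_id:
  assumes M: "M \<in> carrier_mat m (\<Sum>i<k. dL i * dR i)" and "j < k" "y < dL j" "s < dR j" "g < m"
  shows "(M * blockdiag_tensor_id k dL dR A) $$ (g, block_index dL dR j y s) =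
    (\<Sum>x<dL j. M $$ (g, block_index dL dR j x s) * A j $$ (x, y))"
proof -
  have "(M * blockdiag_tensor_id k dL dR A) $$ (g, block_index dL dR j y s) =
      (\<Sum>i<k. \<Sum>x<dL i. \<Sum>r<dR i. M $$ (g, block_index dL dR i x r)
        * blockdiag_tensor_id k dL dR A $$ (block_index dL dR i x r, block_index dL dR j y s))"
    using assms block_index_less[of j k y dL s dR]
    by (simp add: index_mult_mat_sum[OF M blockdiag_tensor_id_carrier] sum_block_index)
  also have "\<dots> = (\<Sum>i<k. \<Sum>x<dL i. \<Sum>r<dR i. if i = j \<and> r = s then M $$ (g, block_index dL dR i x r) * A j $$ (x, y) else 0)"
    using assms by (intro sum.cong refl) (auto simp: index_blockdiag_tensor_id)
  also have "\<dots> = (\<Sum>x<dL j. M $$ (g, block_index dL dR j x s) * A j $$ (x, y))"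
    using assms(2,4) by (rule sum_block_index_delta)
  finally show ?thesis .
qed

lemma index_mult_blockdiag_id_tensor:
  assumes M: "M \<in> carrier_mat m (\<Sum>i<k. dL i * dR i)" and "j < k" "y < dL j" "s < dR j" "g < m"
  shows "(M * blockdiag_id_tensor k dL dR C) $$ (g, block_index dL dR j y s) =
    (\<Sum>r<dR j. M $$ (g, block_index dL dR j y r) * C j $$ (r, s))"
proof -
  have "(M * blockdiag_id_tensor k dL dR C) $$ (g, block_index dL dR j y s) =
      (\<Sum>i<k. \<Sum>x<dL i. \<Sum>r<dR i. M $$ (g, block_index dL dR i x r)
        * blockdiag_id_tensor k dL dR C $$ (block_index dL dR i x r, block_index dL dR j y s))"
    using assms block_index_less[of j k y dL s dR]
    by (simp add: index_mult_mat_sum[OF M blockdiag_id_tensor_carrier] sum_block_index)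
  also have "\<dots> = (\<Sum>i<k. if i = j then (\<Sum>r<dR i. M $$ (g, block_index dL dR i y r) * C j $$ (r, s)) else 0)"
    using assms by (intro sum.cong refl) (auto simp: index_blockdiag_id_tensor if_distrib[of "\<lambda>x. _ * x"] sum_if_const_cond cong: if_cong)
  also have "\<dots> = (\<Sum>r<dR j. M $$ (g, block_index dL dR j y r) * C j $$ (r, s))"
    using assms by simp
  finally show ?thesis .
qed

lemma blockdiag_tensor_id_id_tensor_commute:
  "blockdiag_tensor_id k dL dR A * blockdiag_id_tensor k dL dR C = blockdiag_id_tensor k dL dR C * blockdiag_tensor_id k dL dR A"
proof (rule eq_mat_block_indexI[of _ "\<Sum>i<k. dL i * dR i"])
  fix i x r j y s assume ranges: "i < k" "x < dL i" "r < dR i" "j < k" "y < dL j" "s < dR j"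
  have "(blockdiag_tensor_id k dL dR A * blockdiag_id_tensor k dL dR C) $$ (block_index dL dR i x r, block_index dL dR j y s) =
      (if i = j then A i $$ (x, y) * C i $$ (r, s) else 0)"
    using ranges block_index_less[of j k y dL s dR]
    by (simp add: index_blockdiag_tensor_id_mult[where m = "\<Sum>i<k. dL i * dR i"] index_blockdiag_id_tensor
        if_distrib[of "\<lambda>x. _ * x"] cong: if_cong)
  moreover have "(blockdiag_id_tensor k dL dR C * blockdiag_tensor_id k dL dR A) $$ (block_index dL dR i x r, block_index dL dR j y s) =
      (if i = j then C i $$ (r, s) * A i $$ (x, y) else 0)"
    using ranges block_index_less[of i k x dL r dR]
    by (auto simp: index_mult_blockdiag_tensor_id[where m = "\<Sum>i<k. dL i * dR i"] index_blockdiag_id_tensor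
        if_distrib[of "\<lambda>x. x * _"] cong: if_cong)
  ultimately show "(blockdiag_tensor_id k dL dR A * blockdiag_id_tensor k dL dR C) $$ (block_index dL dR i x r, block_index dL dR j y s) =
      (blockdiag_id_tensor k dL dR C * blockdiag_tensor_id k dL dR A) $$ (block_index dL dR i x r, block_index dL dR j y s)"
    by (simp add: mult.commute)
qed (metis mult_carrier_mat blockdiag_tensor_id_carrier blockdiag_id_tensor_carrier)+

lemma blockdiag_id_tensor_mem_commutant:
  "blockdiag_id_tensor k dL dR C \<in> commutant (\<Sum>i<k. dL i * dR i) (blockdiag_algebra k dL dR)"
  unfolding commutant_def blockdiag_algebra_def using blockdiag_tensor_id_id_tensor_commute by auto

text \<open>Conversely, the commutant of \<open>\<Oplus>\<^sub>i L(\<complex>\<^bsup>dL i\<^esup>) \<otimes> 1\<close> consists of operators \<open>\<Oplus>\<^sub>i 1 \<otimes> C i\<close>;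
  this is tested against the block diagonal matrix units.\<close>

lemma commutant_blockdiag_algebra_index:
  assumes T: "T \<in> commutant (\<Sum>i<k. dL i * dR i) (blockdiag_algebra k dL dR)"
    and ranges: "i < k" "x < dL i" "r < dR i" "j < k" "y < dL j" "s < dR j"
  shows "T $$ (block_index dL dR i x r, block_index dL dR j y s) =
    (if i = j \<and> x = y then T $$ (block_index dL dR i 0 r, block_index dL dR i 0 s) else 0)"
proof -
  let ?n = "\<Sum>i<k. dL i * dR i" and ?idx = "block_index dL dR"
  define E where "E l u v = (\<lambda>i. if i = l then unit_mat (dL i) u v else 0\<^sub>m (dL i) (dL i))" for l u v
  have Tc: "T \<in> carrier_mat ?n ?n" using T by (simp add: commutant_def)
  have test: "(if j' = l \<and> y' = v then T $$ (?idx i' x' r', ?idx l u s') else 0) =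
      (if i' = l \<and> x' = u then T $$ (?idx l v r', ?idx j' y' s') else 0)"
    if "l < k" "u < dL l" "v < dL l" "i' < k" "x' < dL i'" "r' < dR i'" "j' < k" "y' < dL j'" "s' < dR j'"
    for l u v i' x' r' j' y' s'
  proof -
    have "blockdiag_tensor_id k dL dR (E l u v) \<in> blockdiag_algebra k dL dR"
      unfolding blockdiag_algebra_def E_def by auto
    then have comm: "T * blockdiag_tensor_id k dL dR (E l u v) = blockdiag_tensor_id k dL dR (E l u v) * T"
      using T by (simp add: commutant_def)
    have "(T * blockdiag_tensor_id k dL dR (E l u v)) $$ (?idx i' x' r', ?idx j' y' s') =
        (if j' = l \<and> y' = v then T $$ (?idx i' x' r', ?idx l u s') else 0)"
      using that block_index_less[of i' k x' dL r' dR]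
      by (auto simp: index_mult_blockdiag_tensor_id[OF Tc] E_def if_distrib[of "\<lambda>x. _ * x"] cong: if_cong)
    moreover have "(blockdiag_tensor_id k dL dR (E l u v) * T) $$ (?idx i' x' r', ?idx j' y' s') =
        (if i' = l \<and> x' = u then T $$ (?idx l v r', ?idx j' y' s') else 0)"
      using that block_index_less[of j' k y' dL s' dR]
      by (auto simp: index_blockdiag_tensor_id_mult[OF Tc] E_def if_distrib[of "\<lambda>x. x * _"] cong: if_cong)
    ultimately show ?thesis using comm by simp
  qed
  show ?thesis
  proof (cases "i = j \<and> x = y")
    case True
    then show ?thesis using test[of i x 0 i x r i 0 s] ranges by auto
  next
    case False
    then show ?thesis using test[of i x x i x r j y s] ranges by auto
  qed
qed

subsection \<open>Partial traces\<close>

lemma alg_trace_eq_direct_sum: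
  "alg_trace k dL dR V X = direct_sum dL k (\<lambda>i. ptrace_right (dL i) (dR i)
     (adj (embed (\<Sum>i<k. dL i * dR i) (offs (\<lambda>i. dL i * dR i) i) (dL i * dR i)) * (V * X * adj V)
      * embed (\<Sum>i<k. dL i * dR i) (offs (\<lambda>i. dL i * dR i) i) (dL i * dR i)))"
  by (simp add: alg_trace_def direct_sum_def offs_def Let_def)

lemma index_alg_trace:
  assumes "V \<in> carrier_mat n n" "X \<in> carrier_mat n n" "n = (\<Sum>i<k. dL i * dR i)"
    and "i < k" "x < dL i" "j < k" "y < dL j"
  shows "alg_trace k dL dR V X $$ (offs dL i + x, offs dL j + y) =
    (if i = j then (\<Sum>u<dR i. (V * X * adj V) $$ (block_index dL dR i x u, block_index dL dR i y u)) else 0)"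
proof -
  have "offs (\<lambda>i. dL i * dR i) i + dL i * dR i \<le> n"
    using assms offs_add_le[of i k "\<lambda>i. dL i * dR i"] by (simp add: offs_block_dims)
  moreover have "V * X * adj V \<in> carrier_mat n n"
    using assms by (metis mult_carrier_mat mat_adjoint_carrier)
  ultimately show ?thesis
    using assms pair_index_less[of x "dL i" _ "dR i"] pair_index_less[of y "dL i" _ "dR i"]
    by (auto simp: alg_trace_eq_direct_sum index_direct_sum index_ptrace_right index_adj_embed_conj
        block_index_def intro!: sum.cong)
qed

definition block_col_mat :: "nat \<Rightarrow> nat \<Rightarrow> (nat \<Rightarrow> nat) \<Rightarrow> (nat \<Rightarrow> nat \<Rightarrow> nat \<Rightarrow> complex) \<Rightarrow> complex mat" where
  "block_col_mat a k d s = mat a (offs d k) (\<lambda>(p, g). \<Sum>i<k. \<Sum>x<d i. if g = offs d i + x then s i x p else 0)"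

lemma block_col_mat_carrier[simp]: "block_col_mat a k d s \<in> carrier_mat a (offs d k)"
  by (simp add: block_col_mat_def)

lemma dim_block_col_mat[simp]:
  "dim_row (block_col_mat a k d s) = a" "dim_col (block_col_mat a k d s) = offs d k"
  by (simp_all add: block_col_mat_def)

lemma index_block_col_mat:
  assumes "i < k" "x < d i" "p < a"
  shows "block_col_mat a k d s $$ (p, offs d i + x) = s i x p"
proof -
  have "offs d i + x = offs d j + y \<longleftrightarrow> j = i \<and> y = x" if "y < d j" for j y
    using offs_add_inj[of x d i y j] assms(2) that by auto
  then have "block_col_mat a k d s $$ (p, offs d i + x) = (\<Sum>j<k. \<Sum>y<d j. if j = i then if y = x then s j y p else 0 else 0)"
    using assms offs_less[of i k x d] by (auto simp: block_col_mat_def intro!: sum.cong)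
  also have "\<dots> = s i x p"
    using assms by (simp add: sum_if_const_cond)
  finally show ?thesis .
qed

lemma block_col_mat_isometry:
  assumes orth: "\<And>i x j y. i < k \<Longrightarrow> x < d i \<Longrightarrow> j < k \<Longrightarrow> y < d j \<Longrightarrow>
    (\<Sum>p<a. cnj (s i x p) * s j y p) = (if i = j \<and> x = y then 1 else 0)"
  shows "isometry a (offs d k) (block_col_mat a k d s)"
  unfolding isometry_def
proof (intro conjI block_col_mat_carrier eq_mat_offsI)
  fix i x j y assume ranges: "i < k" "x < d i" "j < k" "y < d j"
  then have "(adj (block_col_mat a k d s) * block_col_mat a k d s) $$ (offs d i + x, offs d j + y) =
      (\<Sum>p<a. cnj (s i x p) * s j y p)"
    using offs_less[of i k x d] offs_less[of j k y d]
    by (simp add: index_mult_mat_sum[of _ "offs d k" a _ "offs d k"] index_block_col_mat)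
  also have "\<dots> = 1\<^sub>m (offs d k) $$ (offs d i + x, offs d j + y)"
    using ranges orth offs_less[of i k x d] offs_less[of j k y d] offs_add_inj[of x d i y j] by auto
  finally show "(adj (block_col_mat a k d s) * block_col_mat a k d s) $$ (offs d i + x, offs d j + y) =
      1\<^sub>m (offs d k) $$ (offs d i + x, offs d j + y)" .
qed (auto intro: mult_carrier_mat)

lemma index_ptrace_right_product_conj:
  fixes dL dR :: "nat \<Rightarrow> nat"
  assumes W: "W \<in> carrier_mat (a * b) n" and n: "n = (\<Sum>i<k. dL i * dR i)" and Y: "Y \<in> carrier_mat n n"
    and prod: "\<And>i x r p q. i < k \<Longrightarrow> x < dL i \<Longrightarrow> r < dR i \<Longrightarrow> p < a \<Longrightarrow> q < b \<Longrightarrow>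
      W $$ (p * b + q, block_index dL dR i x r) = s i x p * t i r q"
    and orth: "\<And>i r j u. i < k \<Longrightarrow> r < dR i \<Longrightarrow> j < k \<Longrightarrow> u < dR j \<Longrightarrow>
      (\<Sum>q<b. cnj (t i r q) * t j u q) = (if i = j \<and> r = u then 1 else 0)"
    and pp: "p < a" "p' < a"
  shows "ptrace_right a b (W * Y * adj W) $$ (p, p') =
    (\<Sum>i<k. \<Sum>x<dL i. \<Sum>y<dL i. \<Sum>r<dR i.
      s i x p * Y $$ (block_index dL dR i x r, block_index dL dR i y r) * cnj (s i y p'))"
proof -
  let ?idx = "block_index dL dR"
  let ?F = "\<lambda>q f g. W $$ (p * b + q, f) * Y $$ (f, g) * cnj (W $$ (p' * b + q, g))"
  have inner: "(\<Sum>q<b. W $$ (p * b + q, ?idx i x r) * cnj (W $$ (p' * b + q, ?idx j y u))) =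
      (if j = i \<and> u = r then s i x p * cnj (s j y p') else 0)"
    if "i < k" "x < dL i" "r < dR i" "j < k" "y < dL j" "u < dR j" for i x r j y u
  proof -
    have "(\<Sum>q<b. W $$ (p * b + q, ?idx i x r) * cnj (W $$ (p' * b + q, ?idx j y u))) =
        (\<Sum>q<b. s i x p * t i r q * cnj (s j y p' * t j u q))"
      using that pp by (intro sum.cong refl) (simp add: prod)
    also have "\<dots> = s i x p * cnj (s j y p') * cnj (\<Sum>q<b. cnj (t i r q) * t j u q)"
      by (rule sum_mult_cnj_product)
    finally show ?thesis
      using orth[OF that(1,3,4,6)] by auto
  qed
  have "ptrace_right a b (W * Y * adj W) $$ (p, p') = (\<Sum>q<b. \<Sum>f<n. \<Sum>g<n. ?F q f g)"
    using pp pair_index_less[of p a _ b] pair_index_less[of p' a _ b]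
    by (simp add: index_ptrace_right index_conj_mult_mat_sum[OF W Y])
  also have "\<dots> = (\<Sum>f<n. \<Sum>q<b. \<Sum>g<n. ?F q f g)"
    by (rule sum.swap)
  also have "\<dots> = (\<Sum>f<n. \<Sum>g<n. \<Sum>q<b. ?F q f g)"
    by (rule sum.cong[OF refl], rule sum.swap)
  also have "\<dots> = (\<Sum>f<n. \<Sum>g<n. Y $$ (f, g) * (\<Sum>q<b. W $$ (p * b + q, f) * cnj (W $$ (p' * b + q, g))))"
    by (simp add: sum_distrib_left mult_ac)
  also have "\<dots> = (\<Sum>i<k. \<Sum>x<dL i. \<Sum>r<dR i. \<Sum>j<k. \<Sum>y<dL j. \<Sum>u<dR j.
      if j = i \<and> u = r then Y $$ (?idx i x r, ?idx j y u) * (s i x p * cnj (s j y p')) else 0)"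
    unfolding n sum_block_index by (intro sum.cong refl) (simp add: inner)
  also have "\<dots> = (\<Sum>i<k. \<Sum>x<dL i. \<Sum>r<dR i. \<Sum>y<dL i. Y $$ (?idx i x r, ?idx i y r) * (s i x p * cnj (s i y p')))"
    by (rule sum.cong[OF refl])+ (rule sum_block_index_delta, auto)
  also have "\<dots> = (\<Sum>i<k. \<Sum>x<dL i. \<Sum>y<dL i. \<Sum>r<dR i. s i x p * Y $$ (?idx i x r, ?idx i y r) * cnj (s i y p'))"
    by (rule sum.cong[OF refl], rule sum.cong[OF refl], subst sum.swap) (simp add: mult_ac)
  finally show ?thesis .
qed

lemma ptrace_right_product_conj:
  fixes dL dR :: "nat \<Rightarrow> nat"
  assumes W: "W \<in> carrier_mat (a * b) n" and n: "n = (\<Sum>i<k. dL i * dR i)"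
    and V: "V \<in> carrier_mat n n" and X: "X \<in> carrier_mat n n"
    and prod: "\<And>i x r p q. i < k \<Longrightarrow> x < dL i \<Longrightarrow> r < dR i \<Longrightarrow> p < a \<Longrightarrow> q < b \<Longrightarrow>
      W $$ (p * b + q, block_index dL dR i x r) = s i x p * t i r q"
    and orth: "\<And>i r j u. i < k \<Longrightarrow> r < dR i \<Longrightarrow> j < k \<Longrightarrow> u < dR j \<Longrightarrow>
      (\<Sum>q<b. cnj (t i r q) * t j u q) = (if i = j \<and> r = u then 1 else 0)"
  shows "ptrace_right a b (W * (V * X * adj V) * adj W) =
    block_col_mat a k dL s * alg_trace k dL dR V X * adj (block_col_mat a k dL s)"
proof (rule eq_matI)
  let ?U = "block_col_mat a k dL s" and ?T = "alg_trace k dL dR V X" and ?Y = "V * X * adj V"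
  let ?idx = "block_index dL dR"
  fix p p' assume "p < dim_row (?U * ?T * adj ?U)" "p' < dim_col (?U * ?T * adj ?U)"
  then have pp: "p < a" "p' < a" by simp_all
  have T: "?T \<in> carrier_mat (offs dL k) (offs dL k)"
    by (simp add: alg_trace_def offs_def Let_def)
  have "(?U * ?T * adj ?U) $$ (p, p') = (\<Sum>i<k. \<Sum>x<dL i. \<Sum>j<k. \<Sum>y<dL j.
      ?U $$ (p, offs dL i + x) * ?T $$ (offs dL i + x, offs dL j + y) * cnj (?U $$ (p', offs dL j + y)))"
    by (simp add: index_conj_mult_mat_sum[OF block_col_mat_carrier T pp] sum_offs)
  also have "\<dots> = (\<Sum>i<k. \<Sum>x<dL i. \<Sum>j<k. \<Sum>y<dL j.
      if j = i then s i x p * (\<Sum>u<dR i. ?Y $$ (?idx i x u, ?idx i y u)) * cnj (s i y p') else 0)"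
    using V X n pp by (intro sum.cong refl) (auto simp: index_block_col_mat index_alg_trace)
  also have "\<dots> = (\<Sum>i<k. \<Sum>x<dL i. \<Sum>y<dL i. \<Sum>u<dR i. s i x p * ?Y $$ (?idx i x u, ?idx i y u) * cnj (s i y p'))"
    by (simp add: sum_if_const_cond sum_distrib_left sum_distrib_right)
  also have "\<dots> = ptrace_right a b (W * ?Y * adj W) $$ (p, p')"
    using V X pp by (intro index_ptrace_right_product_conj[OF W n _ prod orth, symmetric]) auto
  finally show "ptrace_right a b (W * ?Y * adj W) $$ (p, p') = (?U * ?T * adj ?U) $$ (p, p')" ..
qed (simp_all add: ptrace_right_def)

subsection \<open>A rank-one criterion\<close>

lemma smult_one_mult_smult_one: "(c \<cdot>\<^sub>m 1\<^sub>m n) * (e \<cdot>\<^sub>m 1\<^sub>m n) = (c * e :: 'a::comm_semiring_1) \<cdot>\<^sub>m 1\<^sub>m n"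
  by (rule eq_matI) (auto simp: index_mult_mat_sum[of _ n n _ n] if_distrib[of "\<lambda>x. x * _"]
      if_distrib[of "\<lambda>x. _ * x"] cong: if_cong)

lemma sum_cnj_mult_self_diff:
  "(\<Sum>p\<in>S. cnj (A p * t1 - B p * t2) * (A p * t1 - B p * t2)) =
   (\<Sum>p\<in>S. cnj (A p) * A p) * (cnj t1 * t1) - (\<Sum>p\<in>S. cnj (A p) * B p) * (cnj t1 * t2)
   - (\<Sum>p\<in>S. cnj (B p) * A p) * (cnj t2 * t1) + (\<Sum>p\<in>S. cnj (B p) * B p) * (cnj t2 * (t2::complex))"
proof -
  have "(\<Sum>p\<in>S. cnj (A p * t1 - B p * t2) * (A p * t1 - B p * t2)) =
      (\<Sum>p\<in>S. cnj (A p) * A p * (cnj t1 * t1) - cnj (A p) * B p * (cnj t1 * t2)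
        - cnj (B p) * A p * (cnj t2 * t1) + cnj (B p) * B p * (cnj t2 * t2))"
    by (intro sum.cong refl) (simp add: algebra_simps)
  then show ?thesis
    by (simp add: sum.distrib sum_subtractf sum_distrib_right)
qed

text \<open>The vectors \<open>\<Sum>\<^sub>c K c e\<^sub>x \<otimes> f\<^sub>c\<close> span a subspace whose projection has the blocks \<open>K c' K c\<^sup>\<dagger>\<close>;
  if these blocks commute, all those vectors are product vectors with a common right factor.\<close>

locale scalar_gram =
  fixes a b d :: nat and K :: "nat \<Rightarrow> complex mat" and \<tau> :: "nat \<Rightarrow> nat \<Rightarrow> complex"
  assumes K_carrier: "\<And>c. c < b \<Longrightarrow> K c \<in> carrier_mat a d"
    and d_pos: "0 < d"
    and gram: "\<And>\<alpha> \<beta>. \<alpha> < b \<Longrightarrow> \<beta> < b \<Longrightarrow> adj (K \<alpha>) * K \<beta> = \<tau> \<alpha> \<beta> \<cdot>\<^sub>m 1\<^sub>m d"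
begin

lemma gram_diag:
  assumes "\<alpha> < b" "\<beta> < b" "x < d"
  shows "(\<Sum>p<a. cnj (K \<alpha> $$ (p, x)) * K \<beta> $$ (p, x)) = \<tau> \<alpha> \<beta>"
proof -
  have "(adj (K \<alpha>) * K \<beta>) $$ (x, x) = \<tau> \<alpha> \<beta>"
    using assms by (simp add: gram)
  then show ?thesis
    using assms K_carrier[of \<alpha>] K_carrier[of \<beta>]
    by (simp add: index_mult_mat_sum[of _ d a _ d])
qed

lemma tau_cnj:
  assumes "\<alpha> < b" "\<beta> < b"
  shows "\<tau> \<beta> \<alpha> = cnj (\<tau> \<alpha> \<beta>)"
proof -
  have "\<tau> \<beta> \<alpha> = (\<Sum>p<a. cnj (K \<beta> $$ (p, 0)) * K \<alpha> $$ (p, 0))"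
    using gram_diag[OF assms(2,1) d_pos] by simp
  also have "\<dots> = cnj (\<Sum>p<a. cnj (K \<alpha> $$ (p, 0)) * K \<beta> $$ (p, 0))"
    by (simp add: mult.commute)
  finally show ?thesis
    using gram_diag[OF assms d_pos] by simp
qed

lemma zero_if_tau_diag_zero:
  assumes "c < b" "\<tau> c c = 0" "p < a" "x < d"
  shows "K c $$ (p, x) = 0"
proof (rule sum_cnj_mult_self_eq_0[where m = a and v = "\<lambda>p. K c $$ (p, x)"])
  show "(\<Sum>p<a. cnj (K c $$ (p, x)) * K c $$ (p, x)) = 0"
    using gram_diag[of c c x] assms by simp
qed (rule assms)

end

locale commuting_gram = scalar_gram +
  assumes blocks_commute: "\<And>c c' e e'. c < b \<Longrightarrow> c' < b \<Longrightarrow> e < b \<Longrightarrow> e' < b \<Longrightarrow>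
    K c' * adj (K c) * (K e' * adj (K e)) = K e' * adj (K e) * (K c' * adj (K c))"
begin

lemma tau_triple:
  assumes "\<alpha> < b" "\<beta> < b" "c < b" "c' < b" "e < b" "e' < b"
  shows "\<tau> \<alpha> c' * \<tau> c e' * \<tau> e \<beta> = \<tau> \<alpha> e' * \<tau> e c' * \<tau> c \<beta>"
proof -
  have dims: "dim_row (K c) = a" "dim_col (K c) = d" if "c < b" for c
    using K_carrier[OF that] by auto
  have sandwich: "adj (K \<alpha>) * (K c' * adj (K c) * (K e' * adj (K e))) * K \<beta> =
      (\<tau> \<alpha> c' * \<tau> c e' * \<tau> e \<beta>) \<cdot>\<^sub>m 1\<^sub>m d"
    if "c < b" "c' < b" "e < b" "e' < b" for c c' e e'
  proof -
    have "adj (K \<alpha>) * (K c' * adj (K c) * (K e' * adj (K e))) * K \<beta> =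
        (adj (K \<alpha>) * K c') * ((adj (K c) * K e') * (adj (K e) * K \<beta>))"
      using assms that by (simp add: dims assoc_mult_mat_dims)
    also have "\<dots> = (\<tau> \<alpha> c' * \<tau> c e' * \<tau> e \<beta>) \<cdot>\<^sub>m 1\<^sub>m d"
      using assms that by (simp add: gram smult_one_mult_smult_one mult.assoc)
    finally show ?thesis .
  qed
  have "((\<tau> \<alpha> c' * \<tau> c e' * \<tau> e \<beta>) \<cdot>\<^sub>m 1\<^sub>m d) $$ (0, 0) = ((\<tau> \<alpha> e' * \<tau> e c' * \<tau> c \<beta>) \<cdot>\<^sub>m 1\<^sub>m d) $$ (0, 0)"
    using sandwich[of c c' e e'] sandwich[of e e' c c'] blocks_commute[of c c' e e'] assms by simp
  then show ?thesis using d_pos by simp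
qed

lemma tau_rank_one:
  assumes "\<alpha> < b" "c < b" "q < b" "\<tau> c c \<noteq> 0"
  shows "\<tau> \<alpha> q * \<tau> c c = \<tau> \<alpha> c * \<tau> c q"
  using tau_triple[of \<alpha> c c q c c] assms by (simp add: mult_ac)

lemma column_proportional:
  assumes c: "c < b" "\<tau> c c \<noteq> 0" and "q < b" "p < a" "x < d"
  shows "K q $$ (p, x) * \<tau> c c = K c $$ (p, x) * \<tau> c q"
proof -
  have cnj_tau: "cnj (\<tau> c c) = \<tau> c c" "\<tau> q c = cnj (\<tau> c q)"
    using tau_cnj[of c c] tau_cnj[of c q] assms by simp_all
  have rank_one: "\<tau> q q * (\<tau> c c * \<tau> c c) = \<tau> c c * (cnj (\<tau> c q) * \<tau> c q)"
    using tau_rank_one[of q c q] assms unfolding cnj_tau by (simp add: mult_ac)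
  have "(\<Sum>p<a. cnj (K q $$ (p, x) * \<tau> c c - K c $$ (p, x) * \<tau> c q) *
      (K q $$ (p, x) * \<tau> c c - K c $$ (p, x) * \<tau> c q)) =
      \<tau> q q * (cnj (\<tau> c c) * \<tau> c c) - \<tau> q c * (cnj (\<tau> c c) * \<tau> c q)
      - \<tau> c q * (cnj (\<tau> c q) * \<tau> c c) + \<tau> c c * (cnj (\<tau> c q) * \<tau> c q)"
    using assms unfolding sum_cnj_mult_self_diff by (simp only: gram_diag)
  also have "\<dots> = 0"
    unfolding cnj_tau rank_one by (simp add: algebra_simps)
  finally have "(\<Sum>p<a. cnj (K q $$ (p, x) * \<tau> c c - K c $$ (p, x) * \<tau> c q) *
      (K q $$ (p, x) * \<tau> c c - K c $$ (p, x) * \<tau> c q)) = 0" .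
  then have "K q $$ (p, x) * \<tau> c c - K c $$ (p, x) * \<tau> c q = 0"
    using assms(4) by (rule sum_cnj_mult_self_eq_0[where v = "\<lambda>p. K q $$ (p, x) * \<tau> c c - K c $$ (p, x) * \<tau> c q"])
  then show ?thesis by simp
qed

theorem product_form: "\<exists>\<sigma> \<theta>. \<forall>c<b. \<forall>p<a. \<forall>x<d. K c $$ (p, x) = \<sigma> x p * \<theta> c"
proof (cases "\<exists>c<b. \<tau> c c \<noteq> 0")
  case True
  then obtain c where c: "c < b" "\<tau> c c \<noteq> 0" by blast
  have "K q $$ (p, x) = K c $$ (p, x) * (\<tau> c q / \<tau> c c)" if "q < b" "p < a" "x < d" for q p x
    using column_proportional[OF c that] c by (simp add: field_simps)
  then show ?thesis
    by (intro exI[of _ "\<lambda>x p. K c $$ (p, x)"] exI[of _ "\<lambda>q. \<tau> c q / \<tau> c c"]) simp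
next
  case False
  then have "K q $$ (p, x) = 0" if "q < b" "p < a" "x < d" for q p x
    using zero_if_tau_diag_zero that by simp
  then show ?thesis
    by (intro exI[of _ "\<lambda>x p. 0"]) simp
qed

end

subsection \<open>Transporting commutation along isometries\<close>

lemma assoc_mult_eq:
  "A * B = C * D \<Longrightarrow> dim_col A = dim_row B \<Longrightarrow> dim_col C = dim_row D \<Longrightarrow> dim_col B = dim_row X \<Longrightarrow>
   dim_col D = dim_row X \<Longrightarrow> A * (B * X) = C * (D * (X :: 'a::semiring_0 mat))"
  by (metis assoc_mult_mat_dims index_mult_mat(3))

lemma conj_adj_commute:
  assumes "\<chi> \<in> carrier_mat m n" "S \<in> carrier_mat n n" "M \<in> carrier_mat m m" "T \<in> carrier_mat m m"
    and "S * adj \<chi> = adj \<chi> * T" "\<chi> * S = T * \<chi>" "M * T = T * M"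
  shows "adj \<chi> * M * \<chi> * S = S * (adj \<chi> * M * \<chi>)"
  using assms
  by (simp add: assoc_mult_mat_dims assoc_mult_eq[OF assms(7)] assoc_mult_eq[OF assms(5)[symmetric]])

lemma conj_commute:
  assumes "\<chi> \<in> carrier_mat m n" "S \<in> carrier_mat n n" "Y \<in> carrier_mat n n" "T \<in> carrier_mat m m"
    and "S * adj \<chi> = adj \<chi> * T" "\<chi> * S = T * \<chi>" "Y * S = S * Y"
  shows "T * (\<chi> * Y * adj \<chi>) = \<chi> * Y * adj \<chi> * T"
  using assms
  by (simp add: assoc_mult_mat_dims assoc_mult_eq[OF assms(6)[symmetric]] assoc_mult_eq[OF assms(7)[symmetric]]
      flip: assms(5))

lemma adj_mult_cancel:
  "adj U * U = 1\<^sub>m n \<Longrightarrow> dim_col U = n \<Longrightarrow> dim_row X = n \<Longrightarrow> adj U * (U * X) = (X :: complex mat)"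
  by (metis assoc_mult_mat_dims dim_mat_adjoint(2) left_mult_one_mat')

lemma unitary_conj_mult:
  assumes "V \<in> carrier_mat n n" "adj V * V = 1\<^sub>m n" "A \<in> carrier_mat n n" "B \<in> carrier_mat n n"
  shows "V * A * adj V * (V * B * adj V) = V * (A * B) * adj V"
  using assms by (simp add: assoc_mult_mat_dims adj_mult_cancel[OF assms(2)])

lemma unitary_conj_commute:
  assumes V: "V \<in> carrier_mat n n" "adj V * V = 1\<^sub>m n" and S: "S \<in> carrier_mat n n" and Y: "Y \<in> carrier_mat n n"
    and comm: "Y * (V * S * adj V) = V * S * adj V * Y"
  shows "adj V * Y * V * S = S * (adj V * Y * V)"
proof -
  have "adj V * Y * V * S = adj V * (Y * (V * S * adj V)) * V"
    using V S Y by (simp add: assoc_mult_mat_dims)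
  also have "\<dots> = adj V * (V * S * adj V * Y) * V"
    by (simp only: comm)
  also have "\<dots> = S * (adj V * Y * V)"
    using V S Y by (simp add: assoc_mult_mat_dims adj_mult_cancel[OF V(2)])
  finally show ?thesis .
qed

lemma index_adj_mult:
  assumes "W \<in> carrier_mat (a * b) n" "M \<in> carrier_mat (a * b) m" "f < n" "g < m"
  shows "(adj W * M) $$ (f, g) = (\<Sum>p<a. \<Sum>q<b. cnj (W $$ (p * b + q, f)) * M $$ (p * b + q, g))"
  using assms pair_index_less[of _ a _ b]
  by (simp add: index_mult_mat_sum[of _ n "a * b" _ m] sum_pair_index)

lemma index_conj_tensor_id_right_unit:
  assumes W: "W \<in> carrier_mat (a * b) n" and "p < a" "p' < a" "f < n" "g < n"
  shows "(adj W * tensor_id_right a b (unit_mat a p p') * W) $$ (f, g) =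
    (\<Sum>q<b. cnj (W $$ (p * b + q, f)) * W $$ (p' * b + q, g))"
  using assms pair_index_less[of _ a _ b]
  by (simp add: assoc_mult_mat_dims index_adj_mult[OF W mult_carrier_mat[OF tensor_id_right_carrier W]]
      index_tensor_id_right_mult[OF W] if_distrib[of "\<lambda>x. x * _"] if_distrib[of "\<lambda>x. _ * x"]
      sum_if_const_cond cong: if_cong)

lemma index_conj_tensor_id_left_unit:
  assumes W: "W \<in> carrier_mat (a * b) n" and "q < b" "q' < b" "f < n" "g < n"
  shows "(adj W * tensor_id_left a b (unit_mat b q q') * W) $$ (f, g) =
    (\<Sum>p<a. cnj (W $$ (p * b + q, f)) * W $$ (p * b + q', g))"
  using assms pair_index_less[of _ a _ b]
  by (simp add: assoc_mult_mat_dims index_adj_mult[OF W mult_carrier_mat[OF tensor_id_left_carrier W]]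
      index_tensor_id_left_mult[OF W] if_distrib[of "\<lambda>x. x * _"] if_distrib[of "\<lambda>x. _ * x"]
      sum_if_const_cond cong: if_cong)

subsection \<open>Lean splittings in Artin-Wedderburn coordinates\<close>

locale lean_aw_splitting =
  fixes n a b k :: nat and \<chi> V :: "complex mat" and \<B> :: "complex mat set" and dL dR :: "nat \<Rightarrow> nat"
  assumes splitting: "splitting_map n a b \<chi>"
    and lean: "lean n a b \<chi>"
    and stloc_R_eq: "stloc_R n a b \<chi> = \<B>"
    and AW: "AW_decomposition n \<B> k dL dR V"
begin

abbreviation idx :: "nat \<Rightarrow> nat \<Rightarrow> nat \<Rightarrow> nat" where
  "idx \<equiv> block_index dL dR"

abbreviation \<D> :: "complex mat set" where
  "\<D> \<equiv> blockdiag_algebra k dL dR"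

definition W :: "complex mat" where
  "W = \<chi> * adj V"

lemma n_eq: "n = (\<Sum>i<k. dL i * dR i)"
  using AW by (simp add: AW_decomposition_def)

lemma dL_pos: "i < k \<Longrightarrow> 0 < dL i" and dR_pos: "i < k \<Longrightarrow> 0 < dR i"
  using AW by (simp_all add: AW_decomposition_def)

lemma V_carrier: "V \<in> carrier_mat n n" and adj_V_V: "adj V * V = 1\<^sub>m n" and V_adj_V: "V * adj V = 1\<^sub>m n"
  using AW by (simp_all add: AW_decomposition_def unitary_mat_def isometry_def)

lemma conj_commutant_eq: "(\<lambda>T. V * T * adj V) ` commutant n \<B> = \<D>"
  using AW by (simp add: AW_decomposition_def blockdiag_algebra_def)

lemma chi_carrier: "\<chi> \<in> carrier_mat (a * b) n" and adj_chi_chi: "adj \<chi> * \<chi> = 1\<^sub>m n"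
  using splitting by (simp_all add: splitting_map_def isometry_def)

lemma commutant_stloc_L: "commutant n (stloc_L n a b \<chi>) = \<B>"
  using lean stloc_R_eq by (simp add: lean_def balanced_def)

lemma stloc_L_subset: "stloc_L n a b \<chi> \<subseteq> commutant n \<B>"
  unfolding commutant_stloc_L[symmetric] by (auto simp: commutant_def stloc_L_def)

lemma W_carrier: "W \<in> carrier_mat (a * b) n"
  unfolding W_def using chi_carrier V_carrier by (metis mult_carrier_mat mat_adjoint_carrier)

lemma adj_W: "adj W = V * adj \<chi>"
  unfolding W_def using mat_adjoint_mult[OF chi_carrier mat_adjoint_carrier[OF V_carrier]] by simp

lemma adj_W_W: "adj W * W = 1\<^sub>m n"
  unfolding adj_W unfolding W_def using chi_carrier V_carrier V_adj_V
  by (simp add: assoc_mult_mat_dims adj_mult_cancel[OF adj_chi_chi])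

lemma conj_chi_eq: "X \<in> carrier_mat n n \<Longrightarrow> \<chi> * X * adj \<chi> = W * (V * X * adj V) * adj W"
  unfolding adj_W unfolding W_def using chi_carrier V_carrier
  by (simp add: assoc_mult_mat_dims adj_mult_cancel[OF adj_V_V])

lemma conj_W_eq: "M \<in> carrier_mat (a * b) (a * b) \<Longrightarrow> adj W * M * W = V * (adj \<chi> * M * \<chi>) * adj V"
  unfolding adj_W unfolding W_def using chi_carrier V_carrier by (simp add: assoc_mult_mat_dims)

lemma conj_chi_carrier: "M \<in> carrier_mat (a * b) (a * b) \<Longrightarrow> adj \<chi> * M * \<chi> \<in> carrier_mat n n"
  using chi_carrier by (metis mult_carrier_mat mat_adjoint_carrier)

lemma commutant_blockdiag_conj_commute:
  assumes "Y \<in> commutant n \<D>" "S \<in> commutant n \<B>"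
  shows "adj V * Y * V * S = S * (adj V * Y * V)"
proof (rule unitary_conj_commute[OF V_carrier adj_V_V])
  show "S \<in> carrier_mat n n" "Y \<in> carrier_mat n n"
    using assms by (simp_all add: commutant_def)
  have "V * S * adj V \<in> \<D>"
    using assms(2) conj_commutant_eq by blast
  then show "Y * (V * S * adj V) = V * S * adj V * Y"
    using assms(1) by (simp add: commutant_def)
qed

lemma tensor_id_right_conj_mem_blockdiag:
  assumes "At \<in> carrier_mat a a"
  shows "adj W * tensor_id_right a b At * W \<in> \<D>"
proof -
  let ?M = "adj \<chi> * tensor_id_right a b At * \<chi>"
  have "?M \<in> commutant n \<B>"
    unfolding commutant_def
  proof (intro CollectI conjI ballI conj_chi_carrier tensor_id_right_carrier)
    fix S assume "S \<in> \<B>"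
    then obtain C where "S \<in> carrier_mat n n" "S * adj \<chi> = adj \<chi> * tensor_id_left a b C"
      "\<chi> * S = tensor_id_left a b C * \<chi>"
      unfolding stloc_R_eq[symmetric] stloc_R_def by blast
    then show "?M * S = S * ?M"
      using chi_carrier by (intro conj_adj_commute[where T = "tensor_id_left a b C"])
        (auto simp: tensor_id_right_left_commute)
  qed
  then show ?thesis
    using conj_commutant_eq conj_W_eq[OF tensor_id_right_carrier] by auto
qed

lemma tensor_id_left_conj_mem_commutant: "adj W * tensor_id_left a b C * W \<in> commutant n \<D>"
proof -
  let ?M = "adj \<chi> * tensor_id_left a b C * \<chi>"
  have "?M \<in> commutant n (stloc_L n a b \<chi>)"
    unfolding commutant_def
  proof (intro CollectI conjI ballI conj_chi_carrier tensor_id_left_carrier)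
    fix S assume "S \<in> stloc_L n a b \<chi>"
    then obtain At where "S \<in> carrier_mat n n" "S * adj \<chi> = adj \<chi> * tensor_id_right a b At"
      "\<chi> * S = tensor_id_right a b At * \<chi>"
      unfolding stloc_L_def by blast
    then show "?M * S = S * ?M"
      using chi_carrier by (intro conj_adj_commute[where T = "tensor_id_right a b At"])
        (auto simp: tensor_id_right_left_commute)
  qed
  then have M: "?M \<in> \<B>"
    using commutant_stloc_L by simp
  show ?thesis
    unfolding commutant_def
  proof (intro CollectI conjI ballI)
    show "adj W * tensor_id_left a b C * W \<in> carrier_mat n n"
      using W_carrier by (metis mult_carrier_mat mat_adjoint_carrier tensor_id_left_carrier)
    fix D assume "D \<in> \<D>"
    then obtain T where T: "T \<in> commutant n \<B>" "D = V * T * adj V"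
      using conj_commutant_eq by blast
    then have "?M * T = T * ?M"
      using M by (simp add: commutant_def)
    then show "adj W * tensor_id_left a b C * W * D = D * (adj W * tensor_id_left a b C * W)"
      using T M conj_chi_carrier[OF tensor_id_left_carrier]
      by (simp add: conj_W_eq commutant_def unitary_conj_mult[OF V_carrier adj_V_V])
  qed
qed

lemma commutant_blockdiag_factor:
  assumes Y: "Y \<in> commutant n \<D>"
  shows "\<exists>C \<in> carrier_mat b b. W * Y = tensor_id_left a b C * W"
proof -
  let ?Y = "adj V * Y * V"
  have "?Y \<in> commutant n (stloc_L n a b \<chi>)"
    unfolding commutant_def
  proof (intro CollectI conjI ballI)
    show "?Y \<in> carrier_mat n n"
      using Y V_carrier by (simp add: commutant_def) (metis mult_carrier_mat mat_adjoint_carrier)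
    fix S assume "S \<in> stloc_L n a b \<chi>"
    then show "?Y * S = S * ?Y"
      using Y stloc_L_subset by (intro commutant_blockdiag_conj_commute) auto
  qed
  then obtain C where C: "C \<in> carrier_mat b b" "\<chi> * ?Y = tensor_id_left a b C * \<chi>"
    unfolding commutant_stloc_L stloc_R_eq[symmetric] stloc_R_def by blast
  have "Y \<in> carrier_mat n n"
    using Y by (simp add: commutant_def)
  then have "W * Y = \<chi> * ?Y * adj V"
    unfolding W_def using chi_carrier V_carrier V_adj_V by (simp add: assoc_mult_mat_dims)
  also have "\<dots> = tensor_id_left a b C * W"
    unfolding C(2) W_def using chi_carrier V_carrier by (simp add: assoc_mult_mat_dims)
  finally show ?thesis using C(1) by blast
qed

lemma cons_L_conj_intertwines:
  assumes "At \<in> cons_L a b \<chi>"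
  shows "\<chi> * (adj \<chi> * tensor_id_right a b At * \<chi>) = tensor_id_right a b At * \<chi>"
    and "adj \<chi> * tensor_id_right a b At * \<chi> * adj \<chi> = adj \<chi> * tensor_id_right a b At"
proof -
  let ?T = "tensor_id_right a b At"
  have comm: "\<chi> * adj \<chi> * ?T = ?T * (\<chi> * adj \<chi>)"
    using assms by (simp add: cons_L_def)
  have "\<chi> * (adj \<chi> * ?T * \<chi>) = \<chi> * adj \<chi> * ?T * \<chi>"
    using chi_carrier by (simp add: assoc_mult_mat_dims)
  also have "\<dots> = ?T * (\<chi> * (adj \<chi> * \<chi>))"
    using chi_carrier by (simp add: comm assoc_mult_mat_dims)
  finally show "\<chi> * (adj \<chi> * ?T * \<chi>) = ?T * \<chi>"
    using chi_carrier by (simp add: adj_chi_chi)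
  have "adj \<chi> * ?T * \<chi> * adj \<chi> = adj \<chi> * (\<chi> * adj \<chi> * ?T)"
    using chi_carrier by (simp add: comm assoc_mult_mat_dims)
  then show "adj \<chi> * ?T * \<chi> * adj \<chi> = adj \<chi> * ?T"
    using chi_carrier by (simp add: assoc_mult_mat_dims adj_mult_cancel[OF adj_chi_chi])
qed

lemma commutant_blockdiag_commute_cons_L:
  assumes Y: "Y \<in> commutant n \<D>" and At: "At \<in> cons_L a b \<chi>"
  shows "tensor_id_right a b At * (W * Y * adj W) = W * Y * adj W * tensor_id_right a b At"
proof -
  let ?Y = "adj V * Y * V" and ?S = "adj \<chi> * tensor_id_right a b At * \<chi>"
  have Yc: "Y \<in> carrier_mat n n"
    using Y by (simp add: commutant_def)
  have "?S \<in> stloc_L n a b \<chi>"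
    unfolding stloc_L_def using At cons_L_conj_intertwines[OF At] conj_chi_carrier[OF tensor_id_right_carrier]
    by (auto simp: cons_L_def)
  then have "?Y * ?S = ?S * ?Y"
    using Y stloc_L_subset by (intro commutant_blockdiag_conj_commute) auto
  then have "tensor_id_right a b At * (\<chi> * ?Y * adj \<chi>) = \<chi> * ?Y * adj \<chi> * tensor_id_right a b At"
    using chi_carrier Yc V_carrier conj_chi_carrier[OF tensor_id_right_carrier] cons_L_conj_intertwines[OF At]
    by (intro conj_commute[of \<chi> "a * b" n ?S]) (auto intro: mult_carrier_mat)
  moreover have "\<chi> * ?Y * adj \<chi> = W * (V * ?Y * adj V) * adj W"
    using Yc V_carrier by (intro conj_chi_eq) (auto intro: mult_carrier_mat)
  moreover have "V * ?Y * adj V = Y"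
    using Yc V_carrier adj_mult_cancel[of "adj V" n] V_adj_V by (simp add: assoc_mult_mat_dims)
  ultimately show ?thesis by simp
qed

lemma commutant_cons_L_commute:
  assumes "P \<in> commutant a (cons_L a b \<chi>)" "Q \<in> commutant a (cons_L a b \<chi>)"
  shows "P * Q = Q * P"
proof -
  have "P \<in> cons_L a b \<chi>"
    using assms(1) lean by (auto simp: lean_def center_def)
  then show ?thesis
    using assms(2) by (simp add: commutant_def)
qed

text \<open>The coefficient of \<open>e\<^sub>p \<otimes> f\<^sub>q\<close> in the image under \<open>W\<close> of the basis vector \<open>e\<^sub>x \<otimes> f\<^sub>r\<close> of the
  \<open>i\<close>-th summand.\<close>

definition psi :: "nat \<Rightarrow> nat \<Rightarrow> nat \<Rightarrow> nat \<Rightarrow> nat \<Rightarrow> complex" where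
  "psi i x r p q = W $$ (p * b + q, idx i x r)"

lemma idx_less: "i < k \<Longrightarrow> x < dL i \<Longrightarrow> r < dR i \<Longrightarrow> idx i x r < n"
  unfolding n_eq by (rule block_index_less)

lemma psi_orthonormal:
  assumes "i < k" "x < dL i" "r < dR i" "j < k" "y < dL j" "s < dR j"
  shows "(\<Sum>p<a. \<Sum>q<b. cnj (psi i x r p q) * psi j y s p q) = (if i = j \<and> x = y \<and> r = s then 1 else 0)"
proof -
  have "(\<Sum>p<a. \<Sum>q<b. cnj (psi i x r p q) * psi j y s p q) = (adj W * W) $$ (idx i x r, idx j y s)"
    unfolding psi_def using assms idx_less by (simp add: index_adj_mult[OF W_carrier W_carrier])
  then show ?thesis
    using assms idx_less by (simp add: adj_W_W block_index_eq_iff)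
qed

lemma psi_left_orthogonal:
  assumes "i < k" "x < dL i" "r < dR i" "j < k" "y < dL j" "s < dR j" "i \<noteq> j" "p < a" "p' < a"
  shows "(\<Sum>q<b. cnj (psi i x r p q) * psi j y s p' q) = 0"
proof -
  obtain A where "adj W * tensor_id_right a b (unit_mat a p p') * W = blockdiag_tensor_id k dL dR A"
    using tensor_id_right_conj_mem_blockdiag[OF unit_mat_carrier[of a p p']]
    unfolding blockdiag_algebra_def by blast
  then have "(adj W * tensor_id_right a b (unit_mat a p p') * W) $$ (idx i x r, idx j y s) = 0"
    using assms by (simp add: index_blockdiag_tensor_id)
  then show ?thesis
    unfolding psi_def using assms idx_less by (simp add: index_conj_tensor_id_right_unit[OF W_carrier])
qed

lemma psi_right_gram:
  assumes "i < k" "x < dL i" "r < dR i" "j < k" "y < dL j" "s < dR j" "q < b" "q' < b"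
  shows "(\<Sum>p<a. cnj (psi i x r p q) * psi j y s p q') =
    (if i = j \<and> x = y then (\<Sum>p<a. cnj (psi i 0 r p q) * psi i 0 s p q') else 0)"
proof -
  have "adj W * tensor_id_left a b (unit_mat b q q') * W \<in> commutant (\<Sum>i<k. dL i * dR i) \<D>"
    using tensor_id_left_conj_mem_commutant n_eq by simp
  from commutant_blockdiag_algebra_index[OF this assms(1-6)] show ?thesis
    unfolding psi_def using assms idx_less dL_pos
    by (cases "i = j \<and> x = y") (auto simp: index_conj_tensor_id_left_unit[OF W_carrier])
qed

definition right_unit :: "nat \<Rightarrow> nat \<Rightarrow> nat \<Rightarrow> complex mat" where
  "right_unit i r s = blockdiag_id_tensor k dL dR (\<lambda>j. if j = i then unit_mat (dR j) r s else 0\<^sub>m (dR j) (dR j))"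

lemma right_unit_carrier: "right_unit i r s \<in> carrier_mat n n"
  unfolding right_unit_def n_eq by (rule blockdiag_id_tensor_carrier)

lemma right_unit_mem_commutant: "right_unit i r s \<in> commutant n \<D>"
  unfolding right_unit_def n_eq by (rule blockdiag_id_tensor_mem_commutant)

lemma index_W_mult_right_unit:
  assumes "u < a * b" "j < k" "y < dL j" "t < dR j" "r < dR i"
  shows "(W * right_unit i r s) $$ (u, idx j y t) = (if j = i \<and> t = s then W $$ (u, idx i y r) else 0)"
  using assms W_carrier unfolding right_unit_def n_eq
  by (auto simp: index_mult_blockdiag_id_tensor if_distrib[of "\<lambda>x. _ * x"] cong: if_cong)

lemma psi_right_step:
  assumes "i < k" "r < dR i"
  shows "\<exists>C. \<forall>x<dL i. \<forall>p<a. \<forall>q<b. psi i x r p q = (\<Sum>q'<b. C $$ (q, q') * psi i x 0 p q')"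
proof -
  obtain C where C: "C \<in> carrier_mat b b" "W * right_unit i r 0 = tensor_id_left a b C * W"
    using commutant_blockdiag_factor[OF right_unit_mem_commutant] by blast
  have "psi i x r p q = (\<Sum>q'<b. C $$ (q, q') * psi i x 0 p q')" if "x < dL i" "p < a" "q < b" for x p q
  proof -
    have "psi i x r p q = (W * right_unit i r 0) $$ (p * b + q, idx i x 0)"
      unfolding psi_def using assms that dR_pos pair_index_less by (simp add: index_W_mult_right_unit)
    then show ?thesis
      unfolding C(2) psi_def using assms that dR_pos idx_less
      by (simp add: index_tensor_id_left_mult[OF W_carrier])
  qed
  then show ?thesis by blast
qed

lemma index_W_right_unit_conj:
  assumes "u < a * b" "v < a * b" "i < k"
  shows "(W * right_unit i 0 0 * adj W) $$ (u, v) = (\<Sum>y<dL i. W $$ (u, idx i y 0) * cnj (W $$ (v, idx i y 0)))"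
proof -
  have WR: "W * right_unit i 0 0 \<in> carrier_mat (a * b) n"
    using W_carrier right_unit_carrier by (rule mult_carrier_mat)
  have "(W * right_unit i 0 0 * adj W) $$ (u, v) = (\<Sum>j<k. \<Sum>y<dL j. \<Sum>t<dR j.
      (W * right_unit i 0 0) $$ (u, idx j y t) * cnj (W $$ (v, idx j y t)))"
    using assms W_carrier by (simp add: index_mult_mat_sum[OF WR mat_adjoint_carrier[OF W_carrier]] n_eq sum_block_index)
  also have "\<dots> = (\<Sum>j<k. \<Sum>y<dL j. \<Sum>t<dR j. if j = i \<and> t = 0 then W $$ (u, idx j y t) * cnj (W $$ (v, idx j y t)) else 0)"
    using assms dR_pos by (intro sum.cong refl) (auto simp: index_W_mult_right_unit)
  also have "\<dots> = (\<Sum>y<dL i. W $$ (u, idx i y 0) * cnj (W $$ (v, idx i y 0)))"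
    using assms dR_pos by (intro sum_block_index_delta) auto
  finally show ?thesis .
qed

text \<open>\<open>right_slice i c\<close> maps \<open>e\<^sub>x\<close> to the \<open>f\<^sub>c\<close>-component of \<open>W (e\<^sub>x \<otimes> f\<^sub>0)\<close> in the \<open>i\<close>-th summand.\<close>

definition right_slice :: "nat \<Rightarrow> nat \<Rightarrow> complex mat" where
  "right_slice i c = mat a (dL i) (\<lambda>(p, x). psi i x 0 p c)"

definition slice_gram :: "nat \<Rightarrow> nat \<Rightarrow> nat \<Rightarrow> complex" where
  "slice_gram i \<alpha> \<beta> = (\<Sum>p<a. cnj (psi i 0 0 p \<alpha>) * psi i 0 0 p \<beta>)"

lemma block_col_mult_adj:
  assumes "i < k" "c < b" "c' < b"
  shows "right_slice i c' * adj (right_slice i c) = partial_entry a b (W * right_unit i 0 0 * adj W) c' c"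
proof (rule eq_matI)
  fix p p' assume "p < dim_row (partial_entry a b (W * right_unit i 0 0 * adj W) c' c)"
    "p' < dim_col (partial_entry a b (W * right_unit i 0 0 * adj W) c' c)"
  then have pp: "p < a" "p' < a" by (simp_all add: partial_entry_def)
  have bc: "right_slice i e \<in> carrier_mat a (dL i)" for e
    by (simp add: right_slice_def)
  show "(right_slice i c' * adj (right_slice i c)) $$ (p, p') = partial_entry a b (W * right_unit i 0 0 * adj W) c' c $$ (p, p')"
    using assms pp pair_index_less[OF pp(1) assms(3)] pair_index_less[OF pp(2) assms(2)]
    by (simp add: index_mult_mat_sum[OF bc mat_adjoint_carrier[OF bc]] index_W_right_unit_conj partial_entry_def)
      (simp add: right_slice_def psi_def)
qed (simp_all add: right_slice_def partial_entry_def)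

lemma block_commuting_gram:
  assumes i: "i < k"
  shows "commuting_gram a b (dL i) (right_slice i) (slice_gram i)"
proof unfold_locales
  show "right_slice i c \<in> carrier_mat a (dL i)" for c
    by (simp add: right_slice_def)
  show "0 < dL i"
    using i dL_pos by simp
  show "adj (right_slice i \<alpha>) * right_slice i \<beta> = slice_gram i \<alpha> \<beta> \<cdot>\<^sub>m 1\<^sub>m (dL i)" if "\<alpha> < b" "\<beta> < b" for \<alpha> \<beta>
  proof (rule eq_matI)
    fix x y assume "x < dim_row (slice_gram i \<alpha> \<beta> \<cdot>\<^sub>m 1\<^sub>m (dL i))" "y < dim_col (slice_gram i \<alpha> \<beta> \<cdot>\<^sub>m 1\<^sub>m (dL i))"
    with i that show "(adj (right_slice i \<alpha>) * right_slice i \<beta>) $$ (x, y) = (slice_gram i \<alpha> \<beta> \<cdot>\<^sub>m 1\<^sub>m (dL i)) $$ (x, y)"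
      using psi_right_gram[of i x 0 i y 0 \<alpha> \<beta>] dR_pos
      by (simp add: index_mult_mat_sum[of _ "dL i" a _ "dL i"] right_slice_def slice_gram_def)
  qed (simp_all add: right_slice_def)
  let ?Z = "W * right_unit i 0 0 * adj W"
  have "partial_entry a b ?Z c' c \<in> commutant a (cons_L a b \<chi>)" if "c < b" "c' < b" for c c'
    unfolding commutant_def
  proof (intro CollectI conjI ballI partial_entry_carrier)
    fix At assume At: "At \<in> cons_L a b \<chi>"
    have "?Z \<in> carrier_mat (a * b) (a * b)"
      using W_carrier right_unit_carrier by (meson mult_carrier_mat mat_adjoint_carrier)
    then show "partial_entry a b ?Z c' c * At = At * partial_entry a b ?Z c' c"
      using At that commutant_blockdiag_commute_cons_L[OF right_unit_mem_commutant At]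
      by (intro partial_entry_commute[symmetric]) (auto simp: cons_L_def)
  qed
  then show "right_slice i c' * adj (right_slice i c) * (right_slice i e' * adj (right_slice i e)) =
      right_slice i e' * adj (right_slice i e) * (right_slice i c' * adj (right_slice i c))"
    if "c < b" "c' < b" "e < b" "e' < b" for c c' e e'
    using that i by (simp add: block_col_mult_adj commutant_cons_L_commute)
qed

lemma psi_block_product:
  assumes i: "i < k"
  shows "\<exists>\<sigma> \<theta>. \<forall>x<dL i. \<forall>r<dR i. \<forall>p<a. \<forall>q<b. psi i x r p q = \<sigma> x p * \<theta> r q"
proof -
  obtain \<sigma> \<theta>\<^sub>0 where prod0: "\<forall>c<b. \<forall>p<a. \<forall>x<dL i. right_slice i c $$ (p, x) = \<sigma> x p * \<theta>\<^sub>0 c"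
    using commuting_gram.product_form[OF block_commuting_gram[OF i]] by blast
  have "\<forall>r. \<exists>C. r < dR i \<longrightarrow>
      (\<forall>x<dL i. \<forall>p<a. \<forall>q<b. psi i x r p q = (\<Sum>q'<b. C $$ (q, q') * psi i x 0 p q'))"
    using psi_right_step[OF i] by blast
  then have "\<exists>C. \<forall>r. r < dR i \<longrightarrow>
      (\<forall>x<dL i. \<forall>p<a. \<forall>q<b. psi i x r p q = (\<Sum>q'<b. C r $$ (q, q') * psi i x 0 p q'))"
    by (rule choice)
  then obtain C where C: "\<forall>r. r < dR i \<longrightarrow>
      (\<forall>x<dL i. \<forall>p<a. \<forall>q<b. psi i x r p q = (\<Sum>q'<b. C r $$ (q, q') * psi i x 0 p q'))"
    by blast
  have "psi i x r p q = \<sigma> x p * (\<Sum>q'<b. C r $$ (q, q') * \<theta>\<^sub>0 q')"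
    if "x < dL i" "r < dR i" "p < a" "q < b" for x r p q
  proof -
    have "psi i x r p q = (\<Sum>q'<b. C r $$ (q, q') * psi i x 0 p q')"
      using C that by blast
    also have "\<dots> = (\<Sum>q'<b. C r $$ (q, q') * (\<sigma> x p * \<theta>\<^sub>0 q'))"
      using prod0 that by (intro sum.cong refl) (simp add: right_slice_def)
    finally show ?thesis
      by (simp add: sum_distrib_left mult_ac)
  qed
  then show ?thesis
    by (intro exI[of _ \<sigma>] exI[of _ "\<lambda>r q. \<Sum>q'<b. C r $$ (q, q') * \<theta>\<^sub>0 q'"]) simp
qed

lemma psi_product:
  "\<exists>\<sigma> \<theta>. \<forall>i<k. \<forall>x<dL i. \<forall>r<dR i. \<forall>p<a. \<forall>q<b. psi i x r p q = \<sigma> i x p * \<theta> i r q"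
proof -
  have "\<forall>i. \<exists>\<sigma>. \<exists>\<theta>. i < k \<longrightarrow> (\<forall>x<dL i. \<forall>r<dR i. \<forall>p<a. \<forall>q<b. psi i x r p q = \<sigma> x p * \<theta> r q)"
    using psi_block_product by blast
  then have "\<exists>\<sigma>. \<forall>i. \<exists>\<theta>. i < k \<longrightarrow> (\<forall>x<dL i. \<forall>r<dR i. \<forall>p<a. \<forall>q<b. psi i x r p q = \<sigma> i x p * \<theta> r q)"
    by (rule choice)
  then obtain \<sigma> where "\<forall>i. \<exists>\<theta>. i < k \<longrightarrow> (\<forall>x<dL i. \<forall>r<dR i. \<forall>p<a. \<forall>q<b. psi i x r p q = \<sigma> i x p * \<theta> r q)"
    by blast
  then have "\<exists>\<theta>. \<forall>i. i < k \<longrightarrow> (\<forall>x<dL i. \<forall>r<dR i. \<forall>p<a. \<forall>q<b. psi i x r p q = \<sigma> i x p * \<theta> i r q)"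
    by (rule choice)
  then show ?thesis by blast
qed

lemma psi_product_normalized:
  obtains s t where "\<And>i x r p q. i < k \<Longrightarrow> x < dL i \<Longrightarrow> r < dR i \<Longrightarrow> p < a \<Longrightarrow> q < b \<Longrightarrow>
      psi i x r p q = s i x p * t i r q"
    and "\<And>i. i < k \<Longrightarrow> (\<Sum>q<b. cnj (t i 0 q) * t i 0 q) = 1"
proof -
  obtain \<sigma> \<theta> where prod: "\<And>i x r p q. i < k \<Longrightarrow> x < dL i \<Longrightarrow> r < dR i \<Longrightarrow> p < a \<Longrightarrow> q < b \<Longrightarrow>
      psi i x r p q = \<sigma> i x p * \<theta> i r q"
    using psi_product by blast
  define \<nu> where "\<nu> i = (\<Sum>q<b. (cmod (\<theta> i 0 q))\<^sup>2)" for i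
  define \<kappa> where "\<kappa> i = complex_of_real (sqrt (\<nu> i))" for i
  have \<nu>: "(\<Sum>q<b. cnj (\<theta> i 0 q) * \<theta> i 0 q) = complex_of_real (\<nu> i)" for i
    unfolding \<nu>_def of_real_sum complex_norm_square by (simp add: mult.commute)
  have \<nu>_pos: "0 < \<nu> i" if i: "i < k" for i
  proof -
    have "(\<Sum>p<a. \<Sum>q<b. cnj (\<sigma> i 0 p * \<theta> i 0 q) * (\<sigma> i 0 p * \<theta> i 0 q)) = 1"
      using psi_orthonormal[of i 0 0 i 0 0] prod i dL_pos dR_pos by simp
    then have "(\<Sum>p<a. cnj (\<sigma> i 0 p) * \<sigma> i 0 p) * complex_of_real (\<nu> i) = 1"
      unfolding sum_product_cnj \<nu> .
    then have "\<nu> i \<noteq> 0" by auto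
    moreover have "0 \<le> \<nu> i" unfolding \<nu>_def by (simp add: sum_nonneg)
    ultimately show ?thesis by simp
  qed
  show ?thesis
  proof
    show "psi i x r p q = \<kappa> i * \<sigma> i x p * (\<theta> i r q / \<kappa> i)"
      if "i < k" "x < dL i" "r < dR i" "p < a" "q < b" for i x r p q
      using prod[OF that] \<nu>_pos[OF that(1)] by (simp add: \<kappa>_def)
    show "(\<Sum>q<b. cnj (\<theta> i 0 q / \<kappa> i) * (\<theta> i 0 q / \<kappa> i)) = 1" if "i < k" for i
    proof -
      have "cnj (\<kappa> i) * \<kappa> i = complex_of_real (\<nu> i)"
        using \<nu>_pos[OF that] by (simp add: \<kappa>_def flip: of_real_mult)
      then show ?thesis
        using \<nu>_pos[OF that] by (simp add: sum_divide_distrib[symmetric] \<nu>)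
    qed
  qed
qed

end

locale lean_aw_factorization = lean_aw_splitting +
  fixes s t :: "nat \<Rightarrow> nat \<Rightarrow> nat \<Rightarrow> complex"
  assumes psi_eq: "\<And>i x r p q. i < k \<Longrightarrow> x < dL i \<Longrightarrow> r < dR i \<Longrightarrow> p < a \<Longrightarrow> q < b \<Longrightarrow>
      psi i x r p q = s i x p * t i r q"
    and right_normalized: "\<And>i. i < k \<Longrightarrow> (\<Sum>q<b. cnj (t i 0 q) * t i 0 q) = 1"
begin

lemma inner_product_factors:
  assumes "i < k" "x < dL i" "r < dR i" "j < k" "y < dL j" "u < dR j"
  shows "(\<Sum>p<a. cnj (s i x p) * s j y p) * (\<Sum>q<b. cnj (t i r q) * t j u q) =
    (if i = j \<and> x = y \<and> r = u then 1 else 0)"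
proof -
  have "(\<Sum>p<a. \<Sum>q<b. cnj (psi i x r p q) * psi j y u p q) =
      (\<Sum>p<a. \<Sum>q<b. cnj (s i x p * t i r q) * (s j y p * t j u q))"
    using assms by (intro sum.cong refl) (simp add: psi_eq)
  then show ?thesis
    using psi_orthonormal[OF assms] sum_product_cnj[where s = "s i x" and t = "t i r" and s' = "s j y" and t' = "t j u"] by simp
qed

lemma left_normalized: "i < k \<Longrightarrow> x < dL i \<Longrightarrow> (\<Sum>p<a. cnj (s i x p) * s i x p) = 1"
  using inner_product_factors[of i x 0 i x 0] right_normalized dR_pos by simp

lemma left_orthonormal_block:
  "i < k \<Longrightarrow> x < dL i \<Longrightarrow> y < dL i \<Longrightarrow> (\<Sum>p<a. cnj (s i x p) * s i y p) = (if x = y then 1 else 0)"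
  using inner_product_factors[of i x 0 i y 0] right_normalized dR_pos by simp

lemma right_orthonormal_block:
  "i < k \<Longrightarrow> r < dR i \<Longrightarrow> u < dR i \<Longrightarrow> (\<Sum>q<b. cnj (t i r q) * t i u q) = (if r = u then 1 else 0)"
  using inner_product_factors[of i 0 r i 0 u] left_normalized dL_pos by simp

lemma left_nonzero: "i < k \<Longrightarrow> \<exists>p<a. s i 0 p \<noteq> 0"
  using left_normalized[of i 0] dL_pos by (metis (no_types, lifting) lessThan_iff mult_zero_right
      sum.neutral zero_neq_one)

lemma right_nonzero: "i < k \<Longrightarrow> \<exists>q<b. t i 0 q \<noteq> 0"
  using right_normalized[of i] by (metis (no_types, lifting) lessThan_iff mult_zero_right
      sum.neutral zero_neq_one)

lemma left_orthogonal:
  assumes "i < k" "x < dL i" "j < k" "y < dL j" "i \<noteq> j"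
  shows "(\<Sum>p<a. cnj (s i x p) * s j y p) = 0"
proof -
  obtain q q' where q: "q < b" "t i 0 q \<noteq> 0" and q': "q' < b" "t j 0 q' \<noteq> 0"
    using right_nonzero assms by blast
  have "(\<Sum>p<a. cnj (psi i x 0 p q) * psi j y 0 p q') = 0"
    using psi_right_gram[of i x 0 j y 0 q q'] assms q q' dR_pos by simp
  moreover have "(\<Sum>p<a. cnj (psi i x 0 p q) * psi j y 0 p q') =
      cnj (t i 0 q) * t j 0 q' * (\<Sum>p<a. cnj (s i x p) * s j y p)"
    using assms q q' dR_pos by (simp add: psi_eq sum_distrib_left mult_ac)
  ultimately show ?thesis
    using q q' by simp
qed

lemma right_orthogonal:
  assumes "i < k" "r < dR i" "j < k" "u < dR j" "i \<noteq> j"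
  shows "(\<Sum>q<b. cnj (t i r q) * t j u q) = 0"
proof -
  obtain p p' where p: "p < a" "s i 0 p \<noteq> 0" and p': "p' < a" "s j 0 p' \<noteq> 0"
    using left_nonzero assms by blast
  have "(\<Sum>q<b. cnj (psi i 0 r p q) * psi j 0 u p' q) = 0"
    using psi_left_orthogonal[of i 0 r j 0 u p p'] assms p p' dL_pos by simp
  moreover have "(\<Sum>q<b. cnj (psi i 0 r p q) * psi j 0 u p' q) =
      cnj (s i 0 p) * s j 0 p' * (\<Sum>q<b. cnj (t i r q) * t j u q)"
    using assms p p' dL_pos by (simp add: psi_eq sum_distrib_left mult_ac)
  ultimately show ?thesis
    using p p' by simp
qed

lemma left_orthonormal:
  "i < k \<Longrightarrow> x < dL i \<Longrightarrow> j < k \<Longrightarrow> y < dL j \<Longrightarrow>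
    (\<Sum>p<a. cnj (s i x p) * s j y p) = (if i = j \<and> x = y then 1 else 0)"
  using left_orthonormal_block left_orthogonal by (cases "i = j") auto

lemma right_orthonormal:
  "i < k \<Longrightarrow> r < dR i \<Longrightarrow> j < k \<Longrightarrow> u < dR j \<Longrightarrow>
    (\<Sum>q<b. cnj (t i r q) * t j u q) = (if i = j \<and> r = u then 1 else 0)"
  using right_orthonormal_block right_orthogonal by (cases "i = j") auto

end

theorem mainTheorem3:
  fixes n a b k :: nat and \<chi> V :: "complex mat" and \<B> :: "complex mat set"
    and dL dR :: "nat \<Rightarrow> nat"
  assumes "vn_algebra n \<B>"
    and "splitting_map n a b \<chi>"
    and "lean n a b \<chi>"
    and "stloc_R n a b \<chi> = \<B>"
    and "AW_decomposition n \<B> k dL dR V"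
  shows "\<exists>U. isometry a (\<Sum>i<k. dL i) U \<and>
           (\<forall>X \<in> carrier_mat n n. chi_trace a b \<chi> X = U * alg_trace k dL dR V X * adj U)"
proof -
  interpret lean_aw_splitting n a b k \<chi> V \<B> dL dR
    using assms(2-5) by unfold_locales
  obtain s t where "\<And>i x r p q. i < k \<Longrightarrow> x < dL i \<Longrightarrow> r < dR i \<Longrightarrow> p < a \<Longrightarrow> q < b \<Longrightarrow>
      psi i x r p q = s i x p * t i r q" and "\<And>i. i < k \<Longrightarrow> (\<Sum>q<b. cnj (t i 0 q) * t i 0 q) = 1"
    using psi_product_normalized by blast
  then interpret lean_aw_factorization n a b k \<chi> V \<B> dL dR s t
    by unfold_locales
  let ?U = "block_col_mat a k dL s"
  have "isometry a (\<Sum>i<k. dL i) ?U"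
    using block_col_mat_isometry[where k = k and d = dL and a = a and s = s] left_orthonormal by (simp add: offs_def)
  moreover have "chi_trace a b \<chi> X = ?U * alg_trace k dL dR V X * adj ?U" if X: "X \<in> carrier_mat n n" for X
    unfolding chi_trace_def conj_chi_eq[OF X]
    using W_carrier n_eq V_carrier X psi_eq[unfolded psi_def] right_orthonormal
    by (rule ptrace_right_product_conj)
  ultimately show ?thesis by blast
qed

end
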